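(* Assume the standing setting and let $a_0$ be a smooth function of $(t,x)\in[0,\tau[\times\mathbb R^d$, $u_0(t,x,y)=a_0(t,x)\chi_n(y,\nabla_x\phi(t,x))$. Then, at every $(t,x)\in[0,\tau[\times\mathbb R^d$, the solvability condition $$\int_Y\overline{\chi_n(y,\nabla_x\phi(t,x))}\Big(L_1u_0-\lambda(t)|u_0|^{2\sigma}u_0\Big)dy=0$$ is equivalent to the transport equation $$\partial_ta_0+\mathcal La_0-\beta(t,x)a_0=i\kappa(t,x)|a_0|^{2\sigma}a_0 .$$
   Context: Standing setting. $d\ge1$, $\sigma\in\mathbb N$. $\Gamma$ is the lattice generated by a basis of $\mathbb R^d$, $Y$ its centered fundamental domain, $\langle f,g\rangle_{L^2(Y)}=\int_Y\overline fg\,dy$. $V_\Gamma\in C^\infty(\mathbb R^d;\mathbb R)$ is $\Gamma$-periodic, $U\in C^\infty(\mathbb R^d;\mathbb R)$, $\lambda\in C^\infty(\mathbb R;\mathbb R)$. For $k\in\mathbb R^d$, $H_\Gamma(k)=\frac12(-i\nabla_y+k)^2+V_\Gamma(y)$ on $\Gamma$-periodic functions, eigenvalues $E_1(k)\le E_2(k)\le\dots$ with $L^2(Y)$-orthonormal eigenfunctions $\chi_m(y,k)$; the band $E_n$ is simple and isolated for all $k$, $E_n,\chi_n$ smooth in $k$. $\phi\in C^\infty([0,\tau[\times\mathbb R^d;\mathbb R)$ solves $\partial_t\phi+E_n(\nabla_x\phi)+U(x)=0$. $L_1u=i\partial_tu+i\nabla_x\phi\cdot\nabla_xu+\frac i2\Delta_x\phi\,u+\sum_{l}\partial_{x_l}\partial_{y_l}u$.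 $\beta(t,x)=\langle\chi_n(\cdot,\nabla_x\phi),\nabla_k\chi_n(\cdot,\nabla_x\phi)\rangle_{L^2(Y)}\cdot\nabla U(x)$; $\kappa(t,x)=-\lambda(t)\int_Y|\chi_n(y,\nabla_x\phi(t,x))|^{2\sigma+2}dy$; $\mathcal La=\nabla_kE_n(\nabla_x\phi)\cdot\nabla_xa+\frac12\operatorname{div}_x(\nabla_kE_n(\nabla_x\phi))a$. *)

theory Defs
  imports "HOL-Analysis.Analysis"
begin

primrec dderiv :: "'a::euclidean_space set \<Rightarrow> 'a list \<Rightarrow> ('a \<Rightarrow> 'b::real_normed_vector) \<Rightarrow> 'a \<Rightarrow> 'b" where
  "dderiv S [] f = f"
| "dderiv S (v # vs) f = (\<lambda>x. frechet_derivative (dderiv S vs f) (at x within S) v)"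

definition smooth_on :: "'a::euclidean_space set \<Rightarrow> ('a \<Rightarrow> 'b::real_normed_vector) \<Rightarrow> bool" where
  "smooth_on S f \<longleftrightarrow> (\<forall>vs. \<forall>x\<in>S. dderiv S vs f differentiable (at x within S))"

definition pd :: "(real^'d \<Rightarrow> 'b::real_normed_vector) \<Rightarrow> real^'d \<Rightarrow> 'd \<Rightarrow> 'b" where
  "pd f x l = vector_derivative (\<lambda>s. f (x + s *\<^sub>R axis l 1)) (at 0)"

definition grad :: "(real^'d \<Rightarrow> real) \<Rightarrow> real^'d \<Rightarrow> real^'d" where
  "grad f x = (\<chi> l. pd f x l)"

definition lap :: "(real^'d \<Rightarrow> 'b::real_normed_vector) \<Rightarrow> real^'d \<Rightarrow> 'b" where
  "lap f x = (\<Sum>l\<in>UNIV. pd (\<lambda>x'. pd f x' l) x l)"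

text \<open>Time derivative on [0,tau[ (one-sided at t = 0).\<close>
definition dt :: "real \<Rightarrow> (real \<Rightarrow> 'b::real_normed_vector) \<Rightarrow> real \<Rightarrow> 'b" where
  "dt \<tau> g t = vector_derivative g (at t within {0..<\<tau>})"

definition lattice :: "('d::finite \<Rightarrow> real^'d) \<Rightarrow> (real^'d) set" where
  "lattice b = {(\<Sum>i\<in>UNIV. of_int (m i) *\<^sub>R b i) | m. True}"

definition fund_dom :: "('d::finite \<Rightarrow> real^'d) \<Rightarrow> (real^'d) set" where
  "fund_dom b = {(\<Sum>i\<in>UNIV. c i *\<^sub>R b i) | c. \<forall>i. -1/2 \<le> c i \<and> c i < 1/2}"

definition periodic :: "('d::finite \<Rightarrow> real^'d) \<Rightarrow> (real^'d \<Rightarrow> 'b) \<Rightarrow> bool" where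
  "periodic b f \<longleftrightarrow> (\<forall>y \<gamma>. \<gamma> \<in> lattice b \<longrightarrow> f (y + \<gamma>) = f y)"

definition l2inner :: "('d::finite \<Rightarrow> real^'d) \<Rightarrow> (real^'d \<Rightarrow> complex) \<Rightarrow> (real^'d \<Rightarrow> complex) \<Rightarrow> complex" where
  "l2inner b f g = integral (fund_dom b) (\<lambda>y. cnj (f y) * g y)"

definition Dk :: "real^'d \<Rightarrow> 'd \<Rightarrow> (real^'d \<Rightarrow> complex) \<Rightarrow> real^'d \<Rightarrow> complex" where
  "Dk k l f = (\<lambda>y. - \<i> * pd f y l + complex_of_real (k $ l) * f y)"

definition Hk :: "(real^'d \<Rightarrow> real) \<Rightarrow> real^'d \<Rightarrow> (real^'d \<Rightarrow> complex) \<Rightarrow> real^'d \<Rightarrow> complex" where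
  "Hk V k f = (\<lambda>y. (1/2) * (\<Sum>l\<in>UNIV. Dk k l (Dk k l f) y) + complex_of_real (V y) * f y)"

definition nl :: "nat \<Rightarrow> complex \<Rightarrow> complex" where
  "nl \<sigma> u = complex_of_real (cmod u ^ (2 * \<sigma>)) * u"

definition L1 :: "real \<Rightarrow> (real \<Rightarrow> real^'d \<Rightarrow> real) \<Rightarrow> (real \<Rightarrow> real^'d \<Rightarrow> real^'d \<Rightarrow> complex)
    \<Rightarrow> real \<Rightarrow> real^'d \<Rightarrow> real^'d \<Rightarrow> complex" where
  "L1 \<tau> \<phi> u t x y =
     \<i> * dt \<tau> (\<lambda>s. u s x y) t
   + \<i> * (\<Sum>l\<in>UNIV. complex_of_real (pd (\<phi> t) x l) * pd (\<lambda>x'. u t x' y) x l)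
   + (\<i> / 2) * complex_of_real (lap (\<phi> t) x) * u t x y
   + (\<Sum>l\<in>UNIV. pd (\<lambda>x'. pd (\<lambda>y'. u t x' y') y l) x l)"

definition beta :: "('d::finite \<Rightarrow> real^'d) \<Rightarrow> (real^'d \<Rightarrow> real^'d \<Rightarrow> complex) \<Rightarrow> (real \<Rightarrow> real^'d \<Rightarrow> real)
    \<Rightarrow> (real^'d \<Rightarrow> real) \<Rightarrow> real \<Rightarrow> real^'d \<Rightarrow> complex" where
  "beta b chin \<phi> U t x =
     (\<Sum>l\<in>UNIV. l2inner b (\<lambda>y. chin y (grad (\<phi> t) x)) (\<lambda>y. pd (chin y) (grad (\<phi> t) x) l)
                 * complex_of_real (pd U x l))"

definition kappa :: "('d::finite \<Rightarrow> real^'d) \<Rightarrow> nat \<Rightarrow> (real \<Rightarrow> real) \<Rightarrow> (real^'d \<Rightarrow> real^'d \<Rightarrow> complex)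
    \<Rightarrow> (real \<Rightarrow> real^'d \<Rightarrow> real) \<Rightarrow> real \<Rightarrow> real^'d \<Rightarrow> real" where
  "kappa b \<sigma> lam chin \<phi> t x =
     - lam t * integral (fund_dom b) (\<lambda>y. cmod (chin y (grad (\<phi> t) x)) ^ (2 * \<sigma> + 2))"

definition Lop :: "(real^'d \<Rightarrow> real) \<Rightarrow> (real \<Rightarrow> real^'d \<Rightarrow> real) \<Rightarrow> (real \<Rightarrow> real^'d \<Rightarrow> complex)
    \<Rightarrow> real \<Rightarrow> real^'d \<Rightarrow> complex" where
  "Lop En \<phi> a t x =
     (\<Sum>l\<in>UNIV. complex_of_real (pd En (grad (\<phi> t) x) l) * pd (a t) x l)
   + (1/2) * complex_of_real (\<Sum>l\<in>UNIV. pd (\<lambda>x'. pd En (grad (\<phi> t) x') l) x l) * a t x"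

end

theory Submission
  imports Defs
begin

text \<open>
  Put \<open>k = \<nabla>\<phi>(t, x)\<close> and \<open>X(y, k) = \<chi>\<^sub>n(y, k)\<close>. By the chain rule \<open>L\<^sub>1 u\<^sub>0\<close> is a linear
  combination of \<open>X\<close>, \<open>\<partial>\<^sub>k X\<close>, \<open>\<partial>\<^sub>y X\<close> and \<open>\<partial>\<^sub>k\<partial>\<^sub>y X\<close>, so the solvability integral is a
  combination of the projections of these derivatives onto \<open>X\<close>.
  Differentiating \<open>(H(k) - E(k)) X = 0\<close> once and twice in \<open>k\<close> and projecting onto \<open>X\<close>, which
  annihilates the range of \<open>H(k) - E(k)\<close> because \<open>H(k)\<close> is symmetric on periodic functions
  (integration by parts over the cell), gives the Feynman--Hellmann identities: the first expresses
  \<open>\<nabla>E\<close> through \<open>\<langle>X, \<partial>\<^sub>y X\<rangle>\<close>, the second the Hessian of \<open>E\<close> through \<open>\<langle>X, \<partial>\<^sub>k X\<rangle>\<close>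
  and \<open>\<langle>X, \<partial>\<^sub>k\<partial>\<^sub>y X\<rangle>\<close>. Together with the gradient of the eikonal equation and the symmetry
  of the Hessian of \<open>\<phi>\<close> they turn the solvability integral into \<open>\<i>\<close> times the residual of the
  transport equation.
\<close>

section \<open>Iterated derivatives of smooth functions\<close>

lemma dderiv_append: "dderiv S vs (dderiv S ws f) = dderiv S (vs @ ws) f"
  by (induction vs) auto

declare dderiv.simps(2) [simp del]

lemma smooth_on_differentiable: "smooth_on S f \<Longrightarrow> x \<in> S \<Longrightarrow> f differentiable (at x within S)"
  unfolding smooth_on_def by (metis dderiv.simps(1))

lemma smooth_on_has_derivative:
  "smooth_on S f \<Longrightarrow> x \<in> S \<Longrightarrow> (f has_derivative frechet_derivative f (at x within S)) (at x within S)"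
  using smooth_on_differentiable frechet_derivative_works by blast

lemma smooth_on_continuous: "smooth_on S f \<Longrightarrow> x \<in> S \<Longrightarrow> continuous (at x within S) f"
  using smooth_on_differentiable differentiable_imp_continuous_within by blast

lemma smooth_on_dderiv: "smooth_on S f \<Longrightarrow> smooth_on S (dderiv S vs f)"
  unfolding smooth_on_def by (metis dderiv_append)

lemma smooth_on_UNIV_has_derivative:
  "smooth_on UNIV f \<Longrightarrow> (f has_derivative frechet_derivative f (at x)) (at x)"
  using smooth_on_has_derivative by fastforce

lemma smooth_on_UNIV_differentiable: "smooth_on UNIV f \<Longrightarrow> f differentiable (at x)"
  using smooth_on_differentiable by blast

lemma smooth_on_UNIV_continuous_on: "smooth_on UNIV f \<Longrightarrow> continuous_on UNIV f"
  using smooth_on_continuous continuous_at_imp_continuous_on by blast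

lemma has_vector_derivative_along_line:
  assumes "(F has_derivative F') (at (p + r *\<^sub>R w) within S)"
    and "\<And>r. r \<in> T \<Longrightarrow> p + r *\<^sub>R w \<in> S"
  shows "((\<lambda>r. F (p + r *\<^sub>R w)) has_vector_derivative F' w) (at r within T)"
proof -
  have "(F has_derivative F') (at (p + r *\<^sub>R w) within (\<lambda>r. p + r *\<^sub>R w) ` T)"
    by (rule has_derivative_subset[OF assms(1)]) (use assms(2) in auto)
  moreover have "((\<lambda>r. p + r *\<^sub>R w) has_derivative (\<lambda>d. d *\<^sub>R w)) (at r within T)"
    by (auto intro!: derivative_eq_intros)
  ultimately have "((\<lambda>r. F (p + r *\<^sub>R w)) has_derivative (\<lambda>d. F' (d *\<^sub>R w))) (at r within T)"
    using has_derivative_in_compose by (fastforce simp: o_def)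
  moreover have "F' (d *\<^sub>R w) = d *\<^sub>R F' w" for d
    using assms(1) has_derivative_linear linear_scale by blast
  ultimately show ?thesis unfolding has_vector_derivative_def by simp
qed

lemma smooth_on_has_vector_derivative_along_line:
  assumes "smooth_on S F" "\<And>r. r \<in> T \<Longrightarrow> p + r *\<^sub>R w \<in> S" "r \<in> T"
  shows "((\<lambda>r. F (p + r *\<^sub>R w)) has_vector_derivative dderiv S [w] F (p + r *\<^sub>R w)) (at r within T)"
proof -
  have "(F has_derivative frechet_derivative F (at (p + r *\<^sub>R w) within S)) (at (p + r *\<^sub>R w) within S)"
    using smooth_on_has_derivative assms by blast
  from has_vector_derivative_along_line[OF this assms(2)] show ?thesis
    by (simp add: dderiv.simps)
qed

lemma increment_near_linear:
  fixes F :: "real \<Rightarrow> 'b::real_normed_vector"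
  assumes h: "0 \<le> h"
    and F': "\<And>r. r \<in> {0..h} \<Longrightarrow> (F has_vector_derivative F' r) (at r within {0..h})"
    and near: "\<And>r. r \<in> {0..h} \<Longrightarrow> norm (F' r - c) \<le> e"
  shows "norm (F h - F 0 - h *\<^sub>R c) \<le> h * e"
proof -
  have "norm ((F h - h *\<^sub>R c) - (F 0 - 0 *\<^sub>R c)) \<le> e * norm (h - 0)"
  proof (rule differentiable_bound[where S = "{0..h}" and f' = "\<lambda>r d. d *\<^sub>R (F' r - c)"])
    fix r assume r: "r \<in> {0..h}"
    show "((\<lambda>r. F r - r *\<^sub>R c) has_derivative (\<lambda>d. d *\<^sub>R (F' r - c))) (at r within {0..h})"
      using F'[OF r] unfolding has_vector_derivative_def
      by (auto intro!: derivative_eq_intros simp: scaleR_diff_right)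
    show "onorm (\<lambda>d. d *\<^sub>R (F' r - c)) \<le> e"
    proof (rule onorm_le)
      fix d :: real
      show "norm (d *\<^sub>R (F' r - c)) \<le> e * norm d"
        using mult_left_mono[OF near[OF r] abs_ge_zero[of d]] by (simp add: mult.commute)
    qed
  qed (use h in auto)
  with h show ?thesis by (simp add: mult.commute diff_diff_eq2 add.commute diff_diff_eq)
qed

lemma difference_quotient_bound:
  fixes g :: "real \<Rightarrow> 'b::real_normed_vector"
  assumes s: "0 < s" and g': "\<And>r. r \<in> {0..s} \<Longrightarrow> (g has_vector_derivative g' r) (at r within {0..s})"
    and bound: "\<And>r. r \<in> {0..s} \<Longrightarrow> norm (g' r) \<le> M"
  shows "norm ((g s - g 0) /\<^sub>R s) \<le> M"
proof -
  have "norm (g s - g 0 - s *\<^sub>R 0) \<le> s * M"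
    using bound by (intro increment_near_linear[OF less_imp_le[OF s] g']) simp_all
  with s show ?thesis by (simp add: inverse_eq_divide pos_divide_le_eq mult.commute)
qed

lemma difference_quotients_tendsto:
  fixes g :: "real \<Rightarrow> 'b::real_normed_vector"
  assumes "(g has_vector_derivative g') (at 0)"
  shows "(\<lambda>k. (g (1 / real (Suc k)) - g 0) /\<^sub>R (1 / real (Suc k))) \<longlonglongrightarrow> g'"
proof -
  from assms have "((\<lambda>h. norm (g (0 + h) - g 0 - h *\<^sub>R g') / norm h) \<longlongrightarrow> 0) (at 0)"
    unfolding has_vector_derivative_def has_derivative_at by blast
  then have lim: "((\<lambda>h. norm (g h - g 0 - h *\<^sub>R g') / norm h) \<longlongrightarrow> 0) (at 0)" by simp
  have "\<forall>\<^sub>F r in at 0. norm (g r - g 0 - r *\<^sub>R g') / norm r = norm ((g r - g 0) /\<^sub>R r - g')"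
    unfolding eventually_at_filter
  proof (rule always_eventually, intro allI impI)
    fix r :: real assume "r \<noteq> 0"
    then have "(g r - g 0) /\<^sub>R r - g' = (1 / r) *\<^sub>R (g r - g 0 - r *\<^sub>R g')"
      by (simp add: scaleR_diff_right inverse_eq_divide)
    then show "norm (g r - g 0 - r *\<^sub>R g') / norm r = norm ((g r - g 0) /\<^sub>R r - g')"
      by simp
  qed
  with lim have "((\<lambda>r. norm ((g r - g 0) /\<^sub>R r - g')) \<longlongrightarrow> 0) (at 0)"
    by (rule Lim_transform_eventually)
  then have "((\<lambda>r. (g r - g 0) /\<^sub>R r) \<longlongrightarrow> g') (at 0)"
    using tendsto_norm_zero_iff LIM_zero_cancel by blast
  moreover have "filterlim (\<lambda>k. 1 / real (Suc k)) (at 0) sequentially"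
    unfolding filterlim_at using LIMSEQ_inverse_real_of_nat by (simp add: inverse_eq_divide)
  ultimately show ?thesis by (rule filterlim_compose)
qed

lemma second_difference_estimate:
  fixes f :: "'a::euclidean_space \<Rightarrow> 'b::real_normed_vector"
  assumes sm: "smooth_on S f" and h: "0 \<le> h"
    and square: "\<And>a b. a \<in> {0..h} \<Longrightarrow> b \<in> {0..h} \<Longrightarrow> x + a *\<^sub>R u + b *\<^sub>R v \<in> S"
    and near: "\<And>a b. a \<in> {0..h} \<Longrightarrow> b \<in> {0..h} \<Longrightarrow>
      norm (dderiv S [v, u] f (x + a *\<^sub>R u + b *\<^sub>R v) - L) \<le> e"
  shows "norm (f (x + h *\<^sub>R u + h *\<^sub>R v) - f (x + h *\<^sub>R u) - f (x + h *\<^sub>R v) + f x - (h * h) *\<^sub>R L)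
    \<le> h * (h * e)"
proof -
  define g where "g = dderiv S [u] f"
  have sg: "smooth_on S g" unfolding g_def by (rule smooth_on_dderiv[OF sm])
  have gv: "dderiv S [v] g = dderiv S [v, u] f" unfolding g_def dderiv_append by simp
  have inner: "norm (g (x + a *\<^sub>R u + h *\<^sub>R v) - g (x + a *\<^sub>R u) - h *\<^sub>R L) \<le> h * e"
    if a: "a \<in> {0..h}" for a
  proof -
    have "((\<lambda>b. g (x + a *\<^sub>R u + b *\<^sub>R v)) has_vector_derivative dderiv S [v, u] f (x + a *\<^sub>R u + b *\<^sub>R v))
        (at b within {0..h})" if b: "b \<in> {0..h}" for b
      using smooth_on_has_vector_derivative_along_line[OF sg, of "{0..h}" "x + a *\<^sub>R u" v b] square[OF a] b
      unfolding gv by simp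
    from increment_near_linear[OF h this near[OF a]] show ?thesis by simp
  qed
  define \<Delta> where "\<Delta> a = f (x + a *\<^sub>R u + h *\<^sub>R v) - f (x + a *\<^sub>R u)" for a
  have "(\<Delta> has_vector_derivative g (x + a *\<^sub>R u + h *\<^sub>R v) - g (x + a *\<^sub>R u)) (at a within {0..h})"
    if a: "a \<in> {0..h}" for a
  proof -
    have "((\<lambda>a. f ((x + h *\<^sub>R v) + a *\<^sub>R u)) has_vector_derivative g ((x + h *\<^sub>R v) + a *\<^sub>R u))
        (at a within {0..h})"
      using smooth_on_has_vector_derivative_along_line[OF sm, of "{0..h}" "x + h *\<^sub>R v" u a] square h a
      unfolding g_def by (auto simp: algebra_simps)
    moreover have "((\<lambda>a. f (x + a *\<^sub>R u)) has_vector_derivative g (x + a *\<^sub>R u)) (at a within {0..h})"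
      using smooth_on_has_vector_derivative_along_line[OF sm, of "{0..h}" x u a] square[of _ 0] h a
      unfolding g_def by auto
    ultimately show ?thesis
      unfolding \<Delta>_def by (auto intro: has_vector_derivative_diff simp: algebra_simps)
  qed
  from increment_near_linear[OF h this inner]
  show ?thesis unfolding \<Delta>_def by (simp add: algebra_simps)
qed

lemma second_difference_quotient_tendsto:
  fixes f :: "'a::euclidean_space \<Rightarrow> 'b::real_normed_vector"
  assumes sm: "smooth_on S f" and x: "x \<in> S" and \<delta>: "\<delta> > 0"
    and square: "\<And>a b. a \<in> {0..\<delta>} \<Longrightarrow> b \<in> {0..\<delta>} \<Longrightarrow> x + a *\<^sub>R u + b *\<^sub>R v \<in> S"
  shows "((\<lambda>h. (f (x + h *\<^sub>R u + h *\<^sub>R v) - f (x + h *\<^sub>R u) - f (x + h *\<^sub>R v) + f x) /\<^sub>R h\<^sup>2)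
           \<longlongrightarrow> dderiv S [v, u] f x) (at_right 0)"
proof (rule tendstoI)
  fix \<epsilon> :: real assume \<epsilon>: "\<epsilon> > 0"
  define L where "L = dderiv S [v, u] f x"
  have "continuous (at x within S) (dderiv S [v, u] f)"
    by (rule smooth_on_continuous[OF smooth_on_dderiv[OF sm] x])
  then obtain \<eta> where \<eta>: "\<eta> > 0" "\<And>z. z \<in> S \<Longrightarrow> dist z x < \<eta> \<Longrightarrow> dist (dderiv S [v, u] f z) L < \<epsilon> / 2"
    using \<epsilon> unfolding continuous_within_eps_delta L_def by (meson half_gt_zero)
  have P: "norm u + norm v + 1 > 0"
    by (smt (verit) norm_ge_zero)
  define h0 where "h0 = min \<delta> (\<eta> / (norm u + norm v + 1))"
  have h0: "h0 > 0" using \<delta> \<eta> P by (simp add: h0_def)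
  show "\<forall>\<^sub>F h in at_right 0.
      dist ((f (x + h *\<^sub>R u + h *\<^sub>R v) - f (x + h *\<^sub>R u) - f (x + h *\<^sub>R v) + f x) /\<^sub>R h\<^sup>2) L < \<epsilon>"
    unfolding eventually_at_right_field
  proof (intro exI[of _ h0] conjI allI impI)
    fix h :: real assume "0 < h" "h < h0"
    then have h: "0 < h" "h \<le> \<delta>" "h * (norm u + norm v + 1) < \<eta>"
      by (simp_all add: h0_def flip: pos_less_divide_eq[OF P])
    have near: "norm (dderiv S [v, u] f (x + a *\<^sub>R u + b *\<^sub>R v) - L) \<le> \<epsilon> / 2"
      if ab: "a \<in> {0..h}" "b \<in> {0..h}" for a b
    proof -
      have "norm (a *\<^sub>R u + b *\<^sub>R v) \<le> h * norm u + h * norm v"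
        using ab by (intro order_trans[OF norm_triangle_ineq] add_mono) (auto intro!: mult_right_mono)
      moreover have "h * (norm u + norm v + 1) = h * norm u + h * norm v + h"
        by (simp add: algebra_simps)
      ultimately have "dist (x + a *\<^sub>R u + b *\<^sub>R v) x < \<eta>"
        using h(1,3) by (simp add: dist_norm add.assoc)
      moreover have "a \<in> {0..\<delta>}" "b \<in> {0..\<delta>}" using ab h(2) by auto
      ultimately have "dist (dderiv S [v, u] f (x + a *\<^sub>R u + b *\<^sub>R v)) L < \<epsilon> / 2"
        by (intro \<eta>(2) square)
      then show ?thesis by (simp add: dist_norm)
    qed
    define \<Delta> where "\<Delta> = f (x + h *\<^sub>R u + h *\<^sub>R v) - f (x + h *\<^sub>R u) - f (x + h *\<^sub>R v) + f x"
    have "norm (\<Delta> - (h * h) *\<^sub>R L) \<le> h * (h * (\<epsilon> / 2))"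
      unfolding \<Delta>_def by (rule second_difference_estimate[OF sm _ _ near]) (use h square in auto)
    moreover have "\<Delta> /\<^sub>R h\<^sup>2 - L = (1 / (h * h)) *\<^sub>R (\<Delta> - (h * h) *\<^sub>R L)"
      using h(1) by (simp add: power2_eq_square scaleR_diff_right inverse_eq_divide)
    ultimately have "dist (\<Delta> /\<^sub>R h\<^sup>2) L \<le> \<epsilon> / 2"
      using h(1) by (simp add: dist_norm divide_le_eq mult.commute mult.left_commute)
    with \<epsilon> show "dist (\<Delta> /\<^sub>R h\<^sup>2) L < \<epsilon>" by linarith
  qed (rule h0)
qed

lemma dderiv_commute:
  fixes f :: "'a::euclidean_space \<Rightarrow> 'b::real_normed_vector"
  assumes sm: "smooth_on S f" and x: "x \<in> S" and \<delta>: "\<delta> > 0"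
    and square: "\<And>a b. a \<in> {0..\<delta>} \<Longrightarrow> b \<in> {0..\<delta>} \<Longrightarrow> x + a *\<^sub>R u + b *\<^sub>R v \<in> S"
  shows "dderiv S [v, u] f x = dderiv S [u, v] f x"
proof -
  have square': "x + a *\<^sub>R v + b *\<^sub>R u \<in> S" if "a \<in> {0..\<delta>}" "b \<in> {0..\<delta>}" for a b
    using square[OF that(2,1)] by (simp add: ac_simps)
  have "(\<lambda>h. (f (x + h *\<^sub>R v + h *\<^sub>R u) - f (x + h *\<^sub>R v) - f (x + h *\<^sub>R u) + f x) /\<^sub>R h\<^sup>2)
      = (\<lambda>h. (f (x + h *\<^sub>R u + h *\<^sub>R v) - f (x + h *\<^sub>R u) - f (x + h *\<^sub>R v) + f x) /\<^sub>R h\<^sup>2)"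
    by (simp add: algebra_simps)
  with second_difference_quotient_tendsto[OF sm x \<delta> square']
  have "((\<lambda>h. (f (x + h *\<^sub>R u + h *\<^sub>R v) - f (x + h *\<^sub>R u) - f (x + h *\<^sub>R v) + f x) /\<^sub>R h\<^sup>2)
           \<longlongrightarrow> dderiv S [u, v] f x) (at_right 0)"
    by simp
  from tendsto_unique[OF _ second_difference_quotient_tendsto[OF sm x \<delta> square] this]
  show ?thesis by simp
qed

lemma dderiv_UNIV_commute:
  fixes f :: "'a::euclidean_space \<Rightarrow> 'b::real_normed_vector"
  assumes "smooth_on UNIV f"
  shows "dderiv UNIV (vs @ v # u # ws) f = dderiv UNIV (vs @ u # v # ws) f"
proof -
  have swap: "dderiv UNIV [v, u] (dderiv UNIV ws f) = dderiv UNIV [u, v] (dderiv UNIV ws f)"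
    by (rule ext, rule dderiv_commute[OF smooth_on_dderiv[OF assms], of _ 1]) auto
  have "dderiv UNIV (vs @ v # u # ws) f = dderiv UNIV vs (dderiv UNIV [v, u] (dderiv UNIV ws f))"
    by (simp add: dderiv_append)
  also have "\<dots> = dderiv UNIV (vs @ u # v # ws) f"
    by (simp only: swap) (simp add: dderiv_append)
  finally show ?thesis .
qed

section \<open>Partial derivatives, slices and the chain rule\<close>

abbreviation dd :: "'a::euclidean_space list \<Rightarrow> ('a \<Rightarrow> 'b::real_normed_vector) \<Rightarrow> 'a \<Rightarrow> 'b" where
  "dd \<equiv> dderiv UNIV"

lemma dd_has_derivative:
  "smooth_on UNIV f \<Longrightarrow> (dd vs f has_derivative (\<lambda>h. dd (h # vs) f p)) (at p)"
  using smooth_on_UNIV_has_derivative[OF smooth_on_dderiv] by (simp add: dderiv.simps)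

lemma smooth_on_has_derivative_dd:
  "smooth_on UNIV f \<Longrightarrow> (f has_derivative (\<lambda>h. dd [h] f p)) (at p)"
  using dd_has_derivative[of f "[]"] by simp

lemma pd_has_derivative:
  assumes "(f has_derivative f') (at x)"
  shows "pd f x l = f' (axis l 1)"
proof -
  have "((\<lambda>r. f (x + r *\<^sub>R axis l 1)) has_vector_derivative f' (axis l 1)) (at 0)"
    by (rule has_vector_derivative_along_line[where S = UNIV]) (use assms in simp_all)
  then show ?thesis unfolding pd_def by (rule vector_derivative_at)
qed

lemma pd_eq_frechet_derivative:
  "f differentiable (at x) \<Longrightarrow> pd f x l = frechet_derivative f (at x) (axis l 1)"
  using pd_has_derivative frechet_derivative_works by blast

lemma pd_dd: "smooth_on UNIV f \<Longrightarrow> pd (dd vs f) x l = dd (axis l 1 # vs) f x"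
  using pd_has_derivative[OF dd_has_derivative] .

lemma pd_diff:
  assumes "f differentiable (at x)" "g differentiable (at x)"
  shows "pd (\<lambda>z. f z - g z) x l = pd f x l - pd g x l"
  using pd_has_derivative[OF has_derivative_diff[OF assms[unfolded frechet_derivative_works]]]
  by (simp add: pd_eq_frechet_derivative assms)

lemma pd_minus:
  assumes "f differentiable (at x)"
  shows "pd (\<lambda>z. - f z) x l = - pd f x l"
  using pd_has_derivative[OF has_derivative_minus[OF assms[unfolded frechet_derivative_works]]]
  by (simp add: pd_eq_frechet_derivative assms)

lemma pd_mult:
  fixes f g :: "real^'d::finite \<Rightarrow> 'b::real_normed_algebra"
  assumes "f differentiable (at x)" "g differentiable (at x)"
  shows "pd (\<lambda>z. f z * g z) x l = pd f x l * g x + f x * pd g x l"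
  using pd_has_derivative[OF has_derivative_mult[OF assms[unfolded frechet_derivative_works]]]
  by (simp add: pd_eq_frechet_derivative assms)

lemma pd_cmult:
  fixes f :: "real^'d::finite \<Rightarrow> 'b::real_normed_algebra"
  assumes "f differentiable (at x)"
  shows "pd (\<lambda>z. c * f z) x l = c * pd f x l"
  using pd_has_derivative[OF has_derivative_mult_right[OF assms[unfolded frechet_derivative_works]]]
  by (simp add: pd_eq_frechet_derivative assms)

lemma pd_linear_combination:
  fixes f g :: "real^'d::finite \<Rightarrow> 'b::real_normed_algebra"
  assumes "f differentiable (at x)" "g differentiable (at x)"
  shows "pd (\<lambda>z. a * f z + c * g z) x l = a * pd f x l + c * pd g x l"
  using pd_has_derivative[OF has_derivative_add[OF has_derivative_mult_right has_derivative_mult_right,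
        OF assms[unfolded frechet_derivative_works]]]
  by (simp add: pd_eq_frechet_derivative assms)

definition ey :: "'d::finite \<Rightarrow> (real^'d) \<times> (real^'d)" where "ey l = (axis l 1, 0)"
definition ek :: "'d::finite \<Rightarrow> (real^'d) \<times> (real^'d)" where "ek l = (0, axis l 1)"

lemma ey_simps [simp]: "fst (ey l) = axis l 1" "snd (ey l) = 0" by (auto simp: ey_def)
lemma ek_simps [simp]: "fst (ek l) = 0" "snd (ek l) = axis l 1" by (auto simp: ek_def)

lemma has_derivative_slice_fst:
  assumes "(f has_derivative f') (at (y, k))"
  shows "((\<lambda>y. f (y, k)) has_derivative (\<lambda>w. f' (w, 0))) (at y)"
  using has_derivative_compose[OF has_derivative_Pair[OF has_derivative_ident has_derivative_const] assms]
  by (simp add: o_def)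

lemma has_derivative_slice_snd:
  assumes "(f has_derivative f') (at (y, k))"
  shows "((\<lambda>k. f (y, k)) has_derivative (\<lambda>w. f' (0, w))) (at k)"
  using has_derivative_compose[OF has_derivative_Pair[OF has_derivative_const has_derivative_ident] assms]
  by (simp add: o_def)

lemma dderiv_slice_fst:
  fixes f :: "'a::euclidean_space \<times> 'c::euclidean_space \<Rightarrow> 'b::real_normed_vector"
  assumes "smooth_on UNIV f"
  shows "dd vs (\<lambda>y. f (y, k)) = (\<lambda>y. dd (map (\<lambda>w. (w, 0)) vs) f (y, k))"
proof (induction vs)
  case (Cons v vs)
  have "((\<lambda>y. dd (map (\<lambda>w. (w, 0)) vs) f (y, k)) has_derivative
      (\<lambda>w. dd ((w, 0) # map (\<lambda>w. (w, 0)) vs) f (y, k))) (at y)" for y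
    by (rule has_derivative_slice_fst[OF dd_has_derivative[OF assms]])
  from frechet_derivative_at[OF this, symmetric] show ?case
    by (simp add: dderiv.simps Cons.IH)
qed simp

lemma smooth_on_slice_fst:
  assumes "smooth_on UNIV f"
  shows "smooth_on UNIV (\<lambda>y. f (y, k))"
  unfolding smooth_on_def dderiv_slice_fst[OF assms]
  using has_derivative_slice_fst[OF dd_has_derivative[OF assms]] by (auto simp: differentiable_def)

lemma continuous_on_slice_fst: "smooth_on UNIV f \<Longrightarrow> continuous_on UNIV (\<lambda>y. f (y, k))"
  using smooth_on_UNIV_continuous_on[OF smooth_on_slice_fst] .

lemma pd_slice_fst: "smooth_on UNIV f \<Longrightarrow> pd (\<lambda>y. f (y, k)) y l = dd [ey l] f (y, k)"
  using pd_has_derivative[OF has_derivative_slice_fst[OF dd_has_derivative[of f "[]"]]]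
  by (simp add: ey_def)

lemma pd_slice_snd: "smooth_on UNIV f \<Longrightarrow> pd (\<lambda>k. f (y, k)) k l = dd [ek l] f (y, k)"
  using pd_has_derivative[OF has_derivative_slice_snd[OF dd_has_derivative[of f "[]"]]]
  by (simp add: ek_def)

lemma sum_nth_scaleR_axis: "(\<Sum>j\<in>UNIV. (x $ j) *\<^sub>R axis j 1) = (x :: real^'n::finite)"
  using basis_expansion[of x] by (simp add: scalar_mult_eq_scaleR)

lemma has_derivative_vecI:
  fixes f :: "'a::real_normed_vector \<Rightarrow> real^'n::finite"
  assumes "\<And>j. ((\<lambda>x. f x $ j) has_derivative (\<lambda>h. f' h $ j)) F"
  shows "(f has_derivative f') F"
proof -
  have "((\<lambda>x. \<Sum>j\<in>UNIV. (f x $ j) *\<^sub>R axis j 1) has_derivative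
      (\<lambda>h. \<Sum>j\<in>UNIV. (f' h $ j) *\<^sub>R axis j (1::real))) F"
    by (intro has_derivative_sum has_derivative_scaleR_left assms)
  then show ?thesis by (simp add: sum_nth_scaleR_axis)
qed

lemma dd_linear_in_direction:
  assumes "smooth_on UNIV f" "finite I"
  shows "dd [\<Sum>i\<in>I. c i *\<^sub>R w i] f p = (\<Sum>i\<in>I. c i *\<^sub>R dd [w i] f p)"
proof -
  have lin: "linear (frechet_derivative f (at p))"
    using has_derivative_linear[OF smooth_on_UNIV_has_derivative[OF assms(1)]] .
  show ?thesis by (simp add: dderiv.simps linear_sum[OF lin] linear_scale[OF lin])
qed

lemma dd_snd_direction:
  fixes X :: "(real^'d::finite) \<times> (real^'d) \<Rightarrow> 'b::real_normed_vector"
  assumes "smooth_on UNIV X"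
  shows "dd [(0, v)] X p = (\<Sum>j\<in>UNIV. (v $ j) *\<^sub>R dd [ek j] X p)"
proof -
  have "(0, v) = (\<Sum>j\<in>UNIV. (v $ j) *\<^sub>R ek j)"
    by (simp add: ek_def sum_prod sum_nth_scaleR_axis)
  then show ?thesis by (simp add: dd_linear_in_direction[OF assms])
qed

lemma dd_axis_direction:
  fixes F :: "real^'d::finite \<Rightarrow> 'b::real_normed_vector"
  assumes "smooth_on UNIV F"
  shows "dd [v] F p = (\<Sum>j\<in>UNIV. (v $ j) *\<^sub>R dd [axis j 1] F p)"
  using dd_linear_in_direction[OF assms, of UNIV "\<lambda>j. v $ j" "\<lambda>j. axis j 1"]
  by (simp add: sum_nth_scaleR_axis)

lemma pd_compose_in_snd:
  fixes X :: "(real^'d::finite) \<times> (real^'d) \<Rightarrow> 'b::real_normed_vector"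
    and G :: "real^'e::finite \<Rightarrow> real^'d"
  assumes X: "smooth_on UNIV X" and G: "(G has_derivative G') (at x)"
  shows "pd (\<lambda>x'. X (y, G x')) x l = (\<Sum>j\<in>UNIV. (G' (axis l 1) $ j) *\<^sub>R dd [ek j] X (y, G x))"
proof -
  have "((\<lambda>x'. X (y, G x')) has_derivative (\<lambda>h. dd [(0, G' h)] X (y, G x))) (at x)"
    using has_derivative_compose[OF has_derivative_Pair[OF has_derivative_const G]
        smooth_on_UNIV_has_derivative[OF X]]
    by (simp add: o_def dderiv.simps)
  then show ?thesis by (simp add: pd_has_derivative dd_snd_direction[OF X])
qed

lemma pd_compose:
  fixes F :: "real^'d::finite \<Rightarrow> 'b::real_normed_vector" and G :: "real^'e::finite \<Rightarrow> real^'d"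
  assumes F: "smooth_on UNIV F" and G: "(G has_derivative G') (at x)"
  shows "pd (\<lambda>x'. F (G x')) x l = (\<Sum>j\<in>UNIV. (G' (axis l 1) $ j) *\<^sub>R dd [axis j 1] F (G x))"
proof -
  have "((\<lambda>x'. F (G x')) has_derivative (\<lambda>h. dd [G' h] F (G x))) (at x)"
    using has_derivative_compose[OF G smooth_on_UNIV_has_derivative[OF F]]
    by (simp add: o_def dderiv.simps)
  then show ?thesis
    by (subst pd_has_derivative, assumption) (subst dd_axis_direction[OF F], rule refl)
qed

lemma has_vector_derivative_compose_in_snd:
  fixes X :: "(real^'d::finite) \<times> (real^'d) \<Rightarrow> 'b::real_normed_vector" and G :: "real \<Rightarrow> real^'d"
  assumes X: "smooth_on UNIV X" and G: "(G has_vector_derivative G') (at t within T)"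
  shows "((\<lambda>s. X (y, G s)) has_vector_derivative (\<Sum>j\<in>UNIV. (G' $ j) *\<^sub>R dd [ek j] X (y, G t)))
    (at t within T)"
proof -
  have "((\<lambda>s. X (y, G s)) has_derivative (\<lambda>h. dd [(0, h *\<^sub>R G')] X (y, G t))) (at t within T)"
    using has_derivative_compose[OF has_derivative_Pair[OF has_derivative_const G[unfolded has_vector_derivative_def]]
        smooth_on_UNIV_has_derivative[OF X]]
    by (simp add: o_def dderiv.simps)
  then show ?thesis
    by (simp add: has_vector_derivative_def dd_snd_direction[OF X] scaleR_sum_right)
qed

lemma has_derivative_space_slice:
  fixes F :: "real \<times> (real^'d::finite) \<Rightarrow> 'b::real_normed_vector"
  assumes F: "smooth_on ({0..<\<tau>} \<times> UNIV) F" and s: "s \<in> {0..<\<tau>}"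
  shows "((\<lambda>z. F (s, z)) has_derivative (\<lambda>w. dderiv ({0..<\<tau>} \<times> UNIV) [(0, w)] F (s, z))) (at z)"
proof -
  have F': "\<And>p. p \<in> {0..<\<tau>} \<times> UNIV \<Longrightarrow>
      (F has_derivative frechet_derivative F (at p within {0..<\<tau>} \<times> UNIV)) (at p within {0..<\<tau>} \<times> UNIV)"
    using smooth_on_has_derivative[OF F] by blast
  have "((\<lambda>z. (s, z)) has_derivative (\<lambda>w. (0, w))) (at z within UNIV)"
    by (auto intro!: derivative_eq_intros)
  moreover have "(\<lambda>z. (s, z)) ` UNIV \<subseteq> {0..<\<tau>} \<times> UNIV" using s by auto
  ultimately show ?thesis
    using has_derivative_in_compose2[OF F' _ UNIV_I] by (simp add: dderiv.simps)
qed

lemma pd_space_slice: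
  fixes F :: "real \<times> (real^'d::finite) \<Rightarrow> 'b::real_normed_vector"
  assumes "smooth_on ({0..<\<tau>} \<times> UNIV) F" and "s \<in> {0..<\<tau>}"
  shows "pd (\<lambda>z. F (s, z)) z l = dderiv ({0..<\<tau>} \<times> UNIV) [(0, axis l 1)] F (s, z)"
  using pd_has_derivative[OF has_derivative_space_slice[OF assms]] .

lemma has_vector_derivative_time_slice:
  fixes F :: "real \<times> (real^'d::finite) \<Rightarrow> 'b::real_normed_vector"
  assumes F: "smooth_on ({0..<\<tau>} \<times> UNIV) F" and s: "s \<in> {0..<\<tau>}"
  shows "((\<lambda>s. F (s, z)) has_vector_derivative dderiv ({0..<\<tau>} \<times> UNIV) [(1, 0)] F (s, z))
    (at s within {0..<\<tau>})"
  using smooth_on_has_vector_derivative_along_line[OF F, of "{0..<\<tau>}" "(0, z)" "(1, 0)" s] s by simp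

lemma dt_eqI:
  assumes "(g has_vector_derivative g') (at s within {0..<\<tau>})" and s: "s \<in> {0..<\<tau>}"
  shows "dt \<tau> g s = g'"
proof -
  have "s islimpt {0..<\<tau>}"
    using islimpt_subset[OF islimpt_greaterThanLessThan1[of s \<tau>]] s by auto
  then show ?thesis
    unfolding dt_def using assms(1) by (intro vector_derivative_within) (auto simp: trivial_limit_within)
qed

lemma dt_time_slice:
  fixes F :: "real \<times> (real^'d::finite) \<Rightarrow> 'b::real_normed_vector"
  assumes F: "smooth_on ({0..<\<tau>} \<times> UNIV) F" and s: "s \<in> {0..<\<tau>}"
    and g: "\<And>r. r \<in> {0..<\<tau>} \<Longrightarrow> g r = F (r, z)"
  shows "dt \<tau> g s = dderiv ({0..<\<tau>} \<times> UNIV) [(1, 0)] F (s, z)"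
  by (rule dt_eqI[OF has_vector_derivative_transform[OF s g has_vector_derivative_time_slice[OF F s]] s])

lemma dderiv_commute_time_space:
  fixes F :: "real \<times> (real^'d::finite) \<Rightarrow> 'b::real_normed_vector"
  assumes F: "smooth_on ({0..<\<tau>} \<times> UNIV) F" and s: "s \<in> {0..<\<tau>}"
    and u: "fst u \<in> {0..1}" and v: "fst v \<in> {0..1}"
  shows "dderiv ({0..<\<tau>} \<times> UNIV) [v, u] F (s, z) = dderiv ({0..<\<tau>} \<times> UNIV) [u, v] F (s, z)"
proof (rule dderiv_commute[OF F])
  show "(s, z) \<in> {0..<\<tau>} \<times> UNIV" "0 < (\<tau> - s) / 3" using s by auto
  fix a b :: real assume ab: "a \<in> {0..(\<tau> - s) / 3}" "b \<in> {0..(\<tau> - s) / 3}"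
  have "a * fst u \<le> a" "b * fst v \<le> b" using ab u v by (auto intro: mult_left_le)
  moreover have "0 \<le> a * fst u" "0 \<le> b * fst v" using ab u v by auto
  ultimately show "(s, z) + a *\<^sub>R u + b *\<^sub>R v \<in> {0..<\<tau>} \<times> UNIV"
    using ab s by (cases u, cases v) auto
qed

section \<open>Integration over the fundamental cell\<close>

definition lattice_comb :: "('d::finite \<Rightarrow> real^'d) \<Rightarrow> real^'d \<Rightarrow> real^'d" where
  "lattice_comb b c = (\<Sum>i\<in>UNIV. (c $ i) *\<^sub>R b i)"

lemma linear_lattice_comb: "linear (lattice_comb b)"
  unfolding lattice_comb_def
  by (intro linearI) (auto simp: scaleR_add_left sum.distrib scaleR_sum_right)

lemma lattice_comb_axis: "lattice_comb b (axis i 1) = b i"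
proof -
  have "(\<Sum>j\<in>UNIV. (axis i 1 $ j) *\<^sub>R b j) = (\<Sum>j\<in>UNIV. if j = i then b j else 0)"
    by (rule sum.cong) (auto simp: axis_def)
  then show ?thesis by (simp add: lattice_comb_def)
qed

lemma basis_in_lattice: "b i \<in> lattice b"
proof -
  have "(\<Sum>j\<in>UNIV. of_int (if j = i then 1 else 0) *\<^sub>R b j) = (\<Sum>j\<in>UNIV. if j = i then b j else 0)"
    by (rule sum.cong) auto
  then have "\<exists>m. b i = (\<Sum>j\<in>UNIV. of_int (m j) *\<^sub>R b j) \<and> True"
    by (intro exI[of _ "\<lambda>j. if j = i then (1::int) else 0"]) simp
  then show ?thesis unfolding lattice_def by simp
qed

lemma has_integral_translate:
  fixes f :: "'a::euclidean_space \<Rightarrow> 'b::banach"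
  assumes "bounded S" "(f has_integral I) S"
  shows "((\<lambda>x. f (x + c)) has_integral I) {x. x + c \<in> S}"
proof -
  obtain a where a: "S \<subseteq> cbox (-a) a" using bounded_subset_cbox_symmetric[OF assms(1)] by blast
  define F where "F x = (if x \<in> S then f x else 0)" for x
  have "(F has_integral I) (cbox (-a) a)" unfolding F_def using has_integral_restrict[OF a] assms(2) by blast
  from has_integral_affinity'[OF this, of 1 c]
  have "((\<lambda>x. F (x + c)) has_integral I) (cbox (-a - c) (a - c))" by (simp add: add.commute)
  moreover have "(\<lambda>x. F (x + c)) = (\<lambda>x. if x \<in> {x. x + c \<in> S} then f (x + c) else 0)"
    by (auto simp: F_def)
  ultimately have "((\<lambda>x. if x \<in> {x. x + c \<in> S} then f (x + c) else 0) has_integral I) (cbox (-a - c) (a - c))"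
    by simp
  moreover have sub: "{x. x + c \<in> S} \<subseteq> cbox (-a - c) (a - c)"
  proof
    fix x assume "x \<in> {x. x + c \<in> S}"
    then have "x + c \<in> cbox (-a) a" using a by auto
    then show "x \<in> cbox (-a - c) (a - c)" by (auto simp: mem_box algebra_simps inner_diff_left)
  qed
  ultimately show ?thesis using has_integral_restrict[OF sub] by blast
qed

lemma continuous_on_integrable_on_bounded:
  fixes f :: "'a::euclidean_space \<Rightarrow> 'b::euclidean_space"
  assumes "continuous_on UNIV f" "bounded S" "S \<in> sets borel"
  shows "f integrable_on S"
proof -
  obtain a where a: "S \<subseteq> cbox (-a) a" using bounded_subset_cbox_symmetric[OF assms(2)] by blast
  have "f absolutely_integrable_on cbox (-a) a"
    by (rule absolutely_integrable_continuous) (use assms(1) continuous_on_subset in blast)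
  moreover have "S \<in> sets lebesgue" using assms(3) by (metis sets_completionI_sets sets_lborel)
  ultimately have "f absolutely_integrable_on S" using set_integrable_subset a by blast
  then show ?thesis using absolutely_integrable_on_def by blast
qed

definition y_periodic :: "('d::finite \<Rightarrow> real^'d) \<Rightarrow> ((real^'d) \<times> 'c \<Rightarrow> 'b) \<Rightarrow> bool" where
  "y_periodic b G \<longleftrightarrow> (\<forall>y k \<gamma>. \<gamma> \<in> lattice b \<longrightarrow> G (y + \<gamma>, k) = G (y, k))"

lemma y_periodic_dd:
  fixes G :: "(real^'d::finite) \<times> 'c::euclidean_space \<Rightarrow> 'b::real_normed_vector"
  assumes G: "smooth_on UNIV G" "y_periodic b G"
  shows "y_periodic b (dd vs G)"
proof (induction vs)
  case (Cons v vs)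
  show ?case unfolding y_periodic_def
  proof (intro allI impI)
    fix y k \<gamma> assume \<gamma>: "\<gamma> \<in> lattice b"
    have "(\<lambda>q. dd vs G (q + (\<gamma>, 0))) = dd vs G"
      using Cons \<gamma> unfolding y_periodic_def by (auto simp: fun_eq_iff)
    moreover have "((\<lambda>q. dd vs G (q + (\<gamma>, 0))) has_derivative (\<lambda>h. dd (h # vs) G ((y, k) + (\<gamma>, 0))))
        (at (y, k))"
      using has_derivative_compose[OF has_derivative_add_const[OF has_derivative_ident, of "(\<gamma>, 0)" "at (y, k)"]
          dd_has_derivative[OF G(1), of vs "(y, k) + (\<gamma>, 0)"]]
      by (simp only: o_def)
    ultimately have "(\<lambda>h. dd (h # vs) G ((y, k) + (\<gamma>, 0))) = (\<lambda>h. dd (h # vs) G (y, k))"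
      using has_derivative_unique[OF _ dd_has_derivative[OF G(1)]] by metis
    from fun_cong[OF this, of v] show "dd (v # vs) G (y + \<gamma>, k) = dd (v # vs) G (y, k)"
      by simp
  qed
qed (use assms in simp)

locale lattice_basis =
  fixes b :: "'d::finite \<Rightarrow> real^'d"
  assumes independent_basis: "independent (range b)" and inj_basis: "inj b"
begin

lemma inj_lattice_comb: "inj (lattice_comb b)"
proof (rule linear_injective_0[OF linear_lattice_comb, THEN iffD2], intro allI impI)
  fix c assume c0: "lattice_comb b c = 0"
  define u where "u v = c $ inv b v" for v
  have "(\<Sum>v\<in>range b. u v *\<^sub>R v) = (\<Sum>i\<in>UNIV. u (b i) *\<^sub>R b i)"
    using sum.reindex[of b UNIV "\<lambda>v. u v *\<^sub>R v"] inj_basis by simp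
  also have "\<dots> = 0" using c0 inj_basis unfolding lattice_comb_def u_def by simp
  finally have "\<forall>v\<in>range b. u v = 0"
    using independent_basis dependent_finite[of "range b"] by auto
  then show "c = 0" using inj_basis by (simp add: vec_eq_iff u_def)
qed

definition coords :: "real^'d \<Rightarrow> real^'d" where
  "coords = inv (lattice_comb b)"

lemma linear_coords: "linear coords"
  unfolding coords_def by (rule inj_linear_imp_inv_linear[OF linear_lattice_comb inj_lattice_comb])

lemma coords_lattice_comb [simp]: "coords (lattice_comb b c) = c"
  unfolding coords_def using inj_lattice_comb by simp

lemma lattice_comb_coords [simp]: "lattice_comb b (coords y) = y"
  unfolding coords_def
  using linear_injective_imp_surjective[OF linear_lattice_comb inj_lattice_comb] by (simp add: surj_f_inv_f)

lemma coords_basis: "coords (b i) = axis i 1"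
  using coords_lattice_comb[of "axis i 1"] by (simp add: lattice_comb_axis)

lemma coords_shift: "coords (y + s *\<^sub>R b i) $ j = coords y $ j + (if j = i then s else 0)"
  using linear_coords by (simp add: linear_add linear_scale coords_basis axis_def)

lemma coords_shift1: "coords (y + b i) $ j = coords y $ j + (if j = i then 1 else 0)"
  using coords_shift[of y 1 i j] by simp

definition cell :: "('d \<Rightarrow> real) \<Rightarrow> ('d \<Rightarrow> real) \<Rightarrow> (real^'d) set" where
  "cell l u = {y. \<forall>j. l j \<le> coords y $ j \<and> coords y $ j < u j}"

lemma mem_cell_iff:
  "y \<in> cell l u \<longleftrightarrow>
     (\<forall>j. j \<noteq> i \<longrightarrow> l j \<le> coords y $ j \<and> coords y $ j < u j) \<and> l i \<le> coords y $ i \<and> coords y $ i < u i"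
  unfolding cell_def by auto

lemma fund_dom_eq_cell: "fund_dom b = cell (\<lambda>_. -1/2) (\<lambda>_. 1/2)"
proof (intro set_eqI iffI)
  fix y assume "y \<in> fund_dom b"
  then obtain c where c: "y = lattice_comb b (\<chi> i. c i)" "\<forall>i. -1/2 \<le> c i \<and> c i < 1/2"
    unfolding fund_dom_def lattice_comb_def by auto
  then show "y \<in> cell (\<lambda>_. -1/2) (\<lambda>_. 1/2)" unfolding cell_def by simp
next
  fix y assume "y \<in> cell (\<lambda>_. -1/2) (\<lambda>_. 1/2)"
  moreover have "y = (\<Sum>i\<in>UNIV. (coords y $ i) *\<^sub>R b i)"
    using lattice_comb_coords[of y] unfolding lattice_comb_def by simp
  ultimately show "y \<in> fund_dom b" unfolding cell_def fund_dom_def by blast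
qed

lemma cell_borel: "cell l u \<in> sets borel"
proof -
  have [measurable]: "coords \<in> borel_measurable borel"
    using linear_coords
    by (intro borel_measurable_continuous_onI linear_continuous_on linear_conv_bounded_linear[THEN iffD1])
  show ?thesis unfolding cell_def by measurable
qed

lemma bounded_cell: "bounded (cell l u)"
proof -
  have "cell l u \<subseteq> lattice_comb b ` cbox (\<chi> j. l j) (\<chi> j. u j)"
  proof
    fix y assume "y \<in> cell l u"
    then have "coords y \<in> cbox (\<chi> j. l j) (\<chi> j. u j)"
      unfolding cell_def by (auto simp: mem_box_cart less_imp_le)
    then show "y \<in> lattice_comb b ` cbox (\<chi> j. l j) (\<chi> j. u j)"
      by (metis image_eqI lattice_comb_coords)
  qed
  moreover have "bounded (lattice_comb b ` cbox (\<chi> j. l j) (\<chi> j. u j))"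
    using linear_lattice_comb by (intro bounded_linear_image bounded_cbox) (simp add: linear_linear)
  ultimately show ?thesis using bounded_subset by blast
qed

lemma integrable_on_cell:
  fixes f :: "real^'d \<Rightarrow> 'b::euclidean_space"
  shows "continuous_on UNIV f \<Longrightarrow> f integrable_on cell l u"
  using continuous_on_integrable_on_bounded bounded_cell cell_borel by blast

lemma integrable_on_fund_dom:
  fixes f :: "real^'d \<Rightarrow> 'b::euclidean_space"
  shows "continuous_on UNIV f \<Longrightarrow> f integrable_on fund_dom b"
  unfolding fund_dom_eq_cell by (rule integrable_on_cell)

lemma integral_fund_dom_shift:
  fixes h :: "real^'d \<Rightarrow> 'b::euclidean_space"
  assumes per: "periodic b h" and ch: "continuous_on UNIV h" and s: "0 \<le> s" "s \<le> 1"
  shows "integral (fund_dom b) (\<lambda>y. h (y + s *\<^sub>R b i)) = integral (fund_dom b) h"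
proof -
  define l0 :: "'d \<Rightarrow> real" where "l0 = (\<lambda>_. -1/2)"
  define u0 :: "'d \<Rightarrow> real" where "u0 = (\<lambda>_. 1/2)"
  define Y where "Y = cell l0 u0"
  define Ys where "Ys = cell (l0(i := -1/2 + s)) (u0(i := 1/2 + s))"
  define A where "A = cell (l0(i := -1/2 + s)) u0"
  define B where "B = cell (l0(i := 1/2)) (u0(i := 1/2 + s))"
  define B' where "B' = cell l0 (u0(i := -1/2 + s))"
  \<comment> \<open>The shifted cell \<open>Ys = A \<union> B\<close>, and \<open>B\<close> is the translate by \<open>b i\<close> of the part \<open>B'\<close> of \<open>Y\<close> missed by \<open>A\<close>.\<close>
  have shift: "{x. x + s *\<^sub>R b i \<in> Ys} = Y"
    unfolding Ys_def Y_def by (intro set_eqI) (simp add: mem_cell_iff[of _ _ _ i] coords_shift l0_def u0_def)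
  have Ys: "Ys = A \<union> B" unfolding Ys_def A_def B_def using s
    by (intro set_eqI) (simp add: mem_cell_iff[of _ _ _ i] l0_def u0_def; auto)
  have AB: "A \<inter> B = {}" unfolding A_def B_def
    by (intro set_eqI) (simp add: mem_cell_iff[of _ _ _ i] l0_def u0_def)
  have Y: "Y = A \<union> B'" unfolding Y_def A_def B'_def using s
    by (intro set_eqI) (simp add: mem_cell_iff[of _ _ _ i] l0_def u0_def; auto)
  have AB': "A \<inter> B' = {}" unfolding A_def B'_def
    by (intro set_eqI) (simp add: mem_cell_iff[of _ _ _ i] l0_def u0_def)
  have B': "{x. x + 1 *\<^sub>R b i \<in> B} = B'"
    unfolding B_def B'_def by (intro set_eqI) (simp add: mem_cell_iff[of _ _ _ i] coords_shift1 l0_def u0_def; auto)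
  have hA: "(h has_integral integral A h) A" and hB: "(h has_integral integral B h) B"
    unfolding A_def B_def by (simp_all add: integrable_on_cell[OF ch] integrable_integral)
  have "(h has_integral (integral A h + integral B h)) Ys"
    unfolding Ys by (rule has_integral_Un[OF hA hB]) (simp add: AB)
  from has_integral_translate[OF _ this, of "s *\<^sub>R b i"]
  have 1: "((\<lambda>y. h (y + s *\<^sub>R b i)) has_integral (integral A h + integral B h)) Y"
    unfolding shift using bounded_cell Ys_def by blast
  from has_integral_translate[OF _ hB, of "1 *\<^sub>R b i"]
  have "((\<lambda>y. h (y + 1 *\<^sub>R b i)) has_integral integral B h) B'" unfolding B' using bounded_cell B_def by blast
  moreover have "h (y + 1 *\<^sub>R b i) = h y" for y using per basis_in_lattice[of b i] unfolding periodic_def by simp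
  ultimately have "(h has_integral integral B h) B'" by simp
  then have 2: "(h has_integral (integral A h + integral B h)) Y"
    unfolding Y by (rule has_integral_Un[OF hA]) (simp add: AB')
  show ?thesis using 1 2 unfolding fund_dom_eq_cell Y_def l0_def u0_def by (simp add: integral_unique)
qed

lemma difference_quotients_bounded:
  fixes h D :: "real^'d \<Rightarrow> 'b::real_normed_vector"
  assumes cont: "continuous_on UNIV D"
    and line: "\<And>y r T. ((\<lambda>r. h (y + r *\<^sub>R v)) has_vector_derivative D (y + r *\<^sub>R v)) (at r within T)"
  obtains M where "\<And>k y. y \<in> fund_dom b \<Longrightarrow>
    norm ((h (y + (1 / real (Suc k)) *\<^sub>R v) - h y) /\<^sub>R (1 / real (Suc k))) \<le> M"
proof -
  obtain R where R: "\<And>y. y \<in> fund_dom b \<Longrightarrow> norm y \<le> R"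
    using bounded_cell unfolding fund_dom_eq_cell bounded_iff by blast
  have "bounded (D ` cball 0 (R + norm v))"
    by (intro compact_imp_bounded compact_continuous_image continuous_on_subset[OF cont]) auto
  then obtain M where M: "\<And>z. z \<in> cball 0 (R + norm v) \<Longrightarrow> norm (D z) \<le> M"
    unfolding bounded_iff by blast
  have "norm ((h (y + (1 / real (Suc k)) *\<^sub>R v) - h y) /\<^sub>R (1 / real (Suc k))) \<le> M"
    if y: "y \<in> fund_dom b" for k y
  proof -
    have "y + r *\<^sub>R v \<in> cball 0 (R + norm v)" if r: "r \<in> {0..1 / real (Suc k)}" for r
    proof -
      have "\<bar>r\<bar> \<le> 1"
        using r order_trans[of r "1 / real (Suc k)" 1] by simp
      then have "\<bar>r\<bar> * norm v \<le> norm v"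
        by (intro mult_left_le_one_le) auto
      then show ?thesis using norm_triangle_ineq[of y "r *\<^sub>R v"] R[OF y] by simp
    qed
    with M show ?thesis using difference_quotient_bound[OF _ line, of "1 / real (Suc k)" y] by simp
  qed
  then show ?thesis by (rule that)
qed

lemma integral_fund_dom_derivative_basis_eq_0:
  fixes h :: "real^'d \<Rightarrow> 'b::euclidean_space"
  assumes per: "periodic b h" and h': "\<And>y. (h has_derivative h' y) (at y)"
    and cont: "continuous_on UNIV (\<lambda>y. h' y (b i))"
  shows "integral (fund_dom b) (\<lambda>y. h' y (b i)) = 0"
proof -
  define D where "D y = h' y (b i)" for y
  have ch: "continuous_on UNIV h"
    unfolding continuous_on_eq_continuous_at[OF open_UNIV] using has_derivative_continuous[OF h'] by blast
  have line: "((\<lambda>r. h (y + r *\<^sub>R b i)) has_vector_derivative D (y + r *\<^sub>R b i)) (at r within T)" for y r T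
    unfolding D_def using h'[of "y + r *\<^sub>R b i"]
    by (intro has_vector_derivative_along_line[where S = UNIV and F' = "h' (y + r *\<^sub>R b i)"]) simp_all
  define q where "q k y = (h (y + (1 / real (Suc k)) *\<^sub>R b i) - h y) /\<^sub>R (1 / real (Suc k))" for k y
  have shifted_integrable: "(\<lambda>y. h (y + c *\<^sub>R b i)) integrable_on fund_dom b" for c
    by (intro integrable_on_fund_dom continuous_on_compose2[OF ch continuous_on_add[OF continuous_on_id continuous_on_const]])
      simp
  have q_integrable: "q k integrable_on fund_dom b" for k
    unfolding q_def by (intro integrable_cmul integrable_diff shifted_integrable integrable_on_fund_dom ch)
  have q_integral: "integral (fund_dom b) (q k) = 0" for k
  proof -
    have "integral (fund_dom b) (\<lambda>y. h (y + (1 / real (Suc k)) *\<^sub>R b i) - h y) = 0"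
      using integral_fund_dom_shift[OF per ch, of "1 / real (Suc k)" i]
      by (simp add: integral_diff[OF shifted_integrable integrable_on_fund_dom[OF ch]])
    then show ?thesis unfolding q_def integral_scaleR_right by simp
  qed
  have "continuous_on UNIV D" using cont by (simp add: D_def[abs_def])
  then obtain M where q_bound: "\<And>k y. y \<in> fund_dom b \<Longrightarrow> norm (q k y) \<le> M"
    unfolding q_def using difference_quotients_bounded[OF _ line] by blast
  have q_tendsto: "(\<lambda>k. q k y) \<longlonglongrightarrow> D y" for y
    using difference_quotients_tendsto[OF line[of y 0 UNIV]] unfolding q_def by simp
  have "(\<lambda>k. integral (fund_dom b) (q k)) \<longlonglongrightarrow> integral (fund_dom b) D"
    by (rule dominated_convergence(2)[OF q_integrable _ q_bound q_tendsto])
      (rule integrable_on_fund_dom[OF continuous_on_const])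
  then have "(\<lambda>k. 0) \<longlonglongrightarrow> integral (fund_dom b) D" by (simp add: q_integral)
  then show ?thesis unfolding D_def by (rule LIMSEQ_unique[OF tendsto_const, symmetric])
qed

lemma integral_fund_dom_derivative_eq_0:
  fixes h :: "real^'d \<Rightarrow> 'b::euclidean_space"
  assumes per: "periodic b h" and h': "\<And>y. (h has_derivative h' y) (at y)"
    and cont: "\<And>v. continuous_on UNIV (\<lambda>y. h' y v)"
  shows "integral (fund_dom b) (\<lambda>y. h' y v) = 0"
proof -
  have expand: "h' y v = (\<Sum>i\<in>UNIV. (coords v $ i) *\<^sub>R h' y (b i))" for y
  proof -
    have lin: "linear (h' y)" using h' has_derivative_linear by blast
    have "h' y v = h' y (\<Sum>i\<in>UNIV. (coords v $ i) *\<^sub>R b i)"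
      using lattice_comb_coords[of v] unfolding lattice_comb_def by simp
    also have "\<dots> = (\<Sum>i\<in>UNIV. (coords v $ i) *\<^sub>R h' y (b i))"
      by (simp add: linear_sum[OF lin] linear_scale[OF lin])
    finally show ?thesis .
  qed
  have "integral (fund_dom b) (\<lambda>y. h' y v)
      = (\<Sum>i\<in>UNIV. integral (fund_dom b) (\<lambda>y. (coords v $ i) *\<^sub>R h' y (b i)))"
    unfolding expand by (rule integral_sum) (auto intro!: integrable_on_fund_dom continuous_intros cont)
  also have "\<dots> = 0"
    by (simp add: integral_fund_dom_derivative_basis_eq_0[OF per h' cont])
  finally show ?thesis .
qed

lemma has_integral_by_parts_fst:
  fixes F G :: "(real^'d) \<times> (real^'d) \<Rightarrow> complex"
  assumes F: "smooth_on UNIV F" "y_periodic b F" and G: "smooth_on UNIV G" "y_periodic b G"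
  shows "((\<lambda>y. cnj (F (y, k)) * dd [ey l] G (y, k) + cnj (dd [ey l] F (y, k)) * G (y, k))
    has_integral 0) (fund_dom b)"
proof -
  define h' where "h' y v = cnj (F (y, k)) * dd [(v, 0)] G (y, k) + cnj (dd [(v, 0)] F (y, k)) * G (y, k)"
    for y v
  have "((\<lambda>y. cnj (F (y, k)) * G (y, k)) has_derivative h' y) (at y)" for y
    unfolding h'_def
    using has_derivative_mult[OF has_derivative_cnj[OF has_derivative_slice_fst[OF smooth_on_has_derivative_dd[OF F(1)]]]
        has_derivative_slice_fst[OF smooth_on_has_derivative_dd[OF G(1)]]] .
  moreover have "periodic b (\<lambda>y. cnj (F (y, k)) * G (y, k))"
    using F(2) G(2) by (simp add: y_periodic_def periodic_def)
  moreover have cont: "continuous_on UNIV (\<lambda>y. h' y v)" for v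
  proof -
    have "continuous_on UNIV (\<lambda>y. dd vs H (y, k))" if "smooth_on UNIV H" for vs and H :: "_ \<Rightarrow> complex"
      using continuous_on_slice_fst[OF smooth_on_dderiv[OF that]] .
    from this[OF F(1), of "[]"] this[OF G(1), of "[]"] this[OF F(1)] this[OF G(1)] show ?thesis
      unfolding h'_def by (intro continuous_on_add continuous_on_mult continuous_on_cnj) simp_all
  qed
  ultimately have "integral (fund_dom b) (\<lambda>y. h' y (axis l 1)) = 0"
    by (intro integral_fund_dom_derivative_eq_0)
  with integrable_integral[OF integrable_on_fund_dom[OF cont[of "axis l 1"]]] show ?thesis
    unfolding h'_def by (simp add: ey_def)
qed

end

section \<open>The Bloch operator\<close>

text \<open>
  \<open>bloch_op V G (y, k)\<close> is \<open>Hk V k\<close> applied to \<open>G(\<cdot>, k)\<close>, stated for functions of \<open>(y, k)\<close> so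
  that it can be differentiated in \<open>k\<close>; \<open>bloch_kinetic G l\<close> is \<open>(-\<i>\<partial>\<^sub>y\<^sub>l + k\<^sub>l)\<^sup>2 G\<close> expanded.
\<close>

definition bloch_kinetic :: "((real^'d::finite) \<times> (real^'d) \<Rightarrow> complex) \<Rightarrow> 'd \<Rightarrow> (real^'d) \<times> (real^'d) \<Rightarrow> complex"
  where "bloch_kinetic G l p = - dd [ey l, ey l] G p - 2 * \<i> * of_real (snd p $ l) * dd [ey l] G p
      + of_real (snd p $ l) * of_real (snd p $ l) * G p"

definition bloch_op :: "(real^'d::finite \<Rightarrow> real) \<Rightarrow> ((real^'d) \<times> (real^'d) \<Rightarrow> complex) \<Rightarrow> (real^'d) \<times> (real^'d) \<Rightarrow> complex"
  where "bloch_op V G p = (1/2) * (\<Sum>l\<in>UNIV. bloch_kinetic G l p) + of_real (V (fst p)) * G p"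

lemma Hk_slice_eq_bloch_op:
  assumes G: "smooth_on UNIV G"
  shows "Hk V k (\<lambda>y. G (y, k)) y = bloch_op V G (y, k)"
proof -
  have Dk_slice: "Dk k l (\<lambda>y. G (y, k)) = (\<lambda>z. - \<i> * dd [ey l] G (z, k) + of_real (k $ l) * G (z, k))" for l
    unfolding Dk_def by (simp add: pd_slice_fst[OF G])
  have slice_differentiable: "(\<lambda>z. H (z, k)) differentiable (at y)" if "smooth_on UNIV H" for H :: "_ \<Rightarrow> complex"
    using smooth_on_UNIV_differentiable[OF smooth_on_slice_fst[OF that]] .
  have "Dk k l (Dk k l (\<lambda>y. G (y, k))) y = bloch_kinetic G l (y, k)" for l
  proof -
    have "pd (\<lambda>z. - \<i> * dd [ey l] G (z, k) + of_real (k $ l) * G (z, k)) y l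
        = - \<i> * pd (\<lambda>z. dd [ey l] G (z, k)) y l + of_real (k $ l) * pd (\<lambda>z. G (z, k)) y l"
      by (rule pd_linear_combination[OF slice_differentiable slice_differentiable,
          OF smooth_on_dderiv[OF G, of "[ey l]"] G])
    also have "\<dots> = - \<i> * dd [ey l, ey l] G (y, k) + of_real (k $ l) * dd [ey l] G (y, k)"
      by (simp only: pd_slice_fst[OF smooth_on_dderiv[OF G, of "[ey l]"]] pd_slice_fst[OF G]
          dderiv_append append.simps)
    finally have pd_eq: "pd (\<lambda>z. - \<i> * dd [ey l] G (z, k) + of_real (k $ l) * G (z, k)) y l
        = - \<i> * dd [ey l, ey l] G (y, k) + of_real (k $ l) * dd [ey l] G (y, k)" .
    have "Dk k l (Dk k l (\<lambda>y. G (y, k))) y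
        = - \<i> * pd (\<lambda>z. - \<i> * dd [ey l] G (z, k) + of_real (k $ l) * G (z, k)) y l
          + of_real (k $ l) * (- \<i> * dd [ey l] G (y, k) + of_real (k $ l) * G (y, k))"
      unfolding Dk_slice by (simp only: Dk_def)
    also have "\<dots> = bloch_kinetic G l (y, k)"
      unfolding pd_eq bloch_kinetic_def by (simp add: algebra_simps)
    finally show ?thesis .
  qed
  then show ?thesis unfolding Hk_def bloch_op_def by simp
qed

lemma continuous_on_bloch_op_slice:
  assumes "smooth_on UNIV G" "continuous_on UNIV V"
  shows "continuous_on UNIV (\<lambda>y. bloch_op V G (y, k))"
proof -
  have slice: "continuous_on UNIV (\<lambda>y. dd vs G (y, k))" for vs
    using continuous_on_slice_fst[OF smooth_on_dderiv[OF assms(1)]] .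
  show ?thesis
    unfolding bloch_op_def bloch_kinetic_def fst_conv snd_conv
    using slice[of "[]"] slice assms(2)
    by (intro continuous_on_add continuous_on_diff continuous_on_mult continuous_on_minus
        continuous_on_sum continuous_on_const continuous_on_of_real) simp_all
qed

lemma (in lattice_basis) has_integral_bloch_kinetic_symmetric:
  fixes F G :: "(real^'d) \<times> (real^'d) \<Rightarrow> complex"
  assumes F: "smooth_on UNIV F" "y_periodic b F" and G: "smooth_on UNIV G" "y_periodic b G"
  shows "((\<lambda>y. cnj (F (y, k)) * bloch_kinetic G l (y, k) - cnj (bloch_kinetic F l (y, k)) * G (y, k))
    has_integral 0) (fund_dom b)"
proof -
  have dF: "smooth_on UNIV (dd [ey l] F)" "y_periodic b (dd [ey l] F)"
    using smooth_on_dderiv[OF F(1)] y_periodic_dd[OF F] by auto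
  have dG: "smooth_on UNIV (dd [ey l] G)" "y_periodic b (dd [ey l] G)"
    using smooth_on_dderiv[OF G(1)] y_periodic_dd[OF G] by auto
  from has_integral_diff[OF has_integral_diff[OF has_integral_by_parts_fst[OF dF G, of k l]
        has_integral_by_parts_fst[OF F dG, of k l]]
      has_integral_mult_right[OF has_integral_by_parts_fst[OF F G, of k l], of "2 * \<i> * of_real (k $ l)"],
      unfolded diff_self mult_zero_right]
  show ?thesis
    by (rule has_integral_eq[rotated]) (simp add: bloch_kinetic_def dderiv_append algebra_simps)
qed

lemma (in lattice_basis) bloch_op_symmetric:
  fixes F G :: "(real^'d) \<times> (real^'d) \<Rightarrow> complex"
  assumes F: "smooth_on UNIV F" "y_periodic b F" and G: "smooth_on UNIV G" "y_periodic b G"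
    and V: "continuous_on UNIV V"
  shows "integral (fund_dom b) (\<lambda>y. cnj (F (y, k)) * bloch_op V G (y, k))
       = integral (fund_dom b) (\<lambda>y. cnj (bloch_op V F (y, k)) * G (y, k))"
proof -
  note kinetic = has_integral_bloch_kinetic_symmetric[OF F G]
  have "((\<lambda>y. \<Sum>l\<in>UNIV. cnj (F (y, k)) * bloch_kinetic G l (y, k) - cnj (bloch_kinetic F l (y, k)) * G (y, k))
      has_integral (\<Sum>l\<in>UNIV. 0)) (fund_dom b)"
    using has_integral_sum[of UNIV "\<lambda>l y. cnj (F (y, k)) * bloch_kinetic G l (y, k) - cnj (bloch_kinetic F l (y, k)) * G (y, k)"
        "\<lambda>_. 0" "fund_dom b"] kinetic
    by simp
  then have "((\<lambda>y. (1/2) * (\<Sum>l\<in>UNIV. cnj (F (y, k)) * bloch_kinetic G l (y, k) - cnj (bloch_kinetic F l (y, k)) * G (y, k)))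
      has_integral (1/2) * 0) (fund_dom b)"
    unfolding sum.neutral_const by (rule has_integral_mult_right)
  then have "((\<lambda>y. (1/2) * (\<Sum>l\<in>UNIV. cnj (F (y, k)) * bloch_kinetic G l (y, k) - cnj (bloch_kinetic F l (y, k)) * G (y, k)))
      has_integral 0) (fund_dom b)"
    by (simp only: mult_zero_right)
  then have difference: "((\<lambda>y. cnj (F (y, k)) * bloch_op V G (y, k) - cnj (bloch_op V F (y, k)) * G (y, k))
      has_integral 0) (fund_dom b)"
    by (rule has_integral_eq[rotated])
      (simp add: bloch_op_def sum_subtractf sum_distrib_left sum_distrib_right algebra_simps)
  have FG: "(\<lambda>y. cnj (F (y, k)) * bloch_op V G (y, k)) integrable_on fund_dom b"
    by (intro integrable_on_fund_dom continuous_on_mult continuous_on_cnj continuous_on_slice_fst[OF F(1)]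
        continuous_on_bloch_op_slice[OF G(1) V])
  have GF: "(\<lambda>y. cnj (bloch_op V F (y, k)) * G (y, k)) integrable_on fund_dom b"
    by (intro integrable_on_fund_dom continuous_on_mult continuous_on_cnj continuous_on_slice_fst[OF G(1)]
        continuous_on_bloch_op_slice[OF F(1) V])
  have "integral (fund_dom b) (\<lambda>y. cnj (F (y, k)) * bloch_op V G (y, k))
      - integral (fund_dom b) (\<lambda>y. cnj (bloch_op V F (y, k)) * G (y, k)) = 0"
    using integral_diff[OF FG GF] integral_unique[OF difference] by simp
  then show ?thesis by simp
qed

lemma has_derivative_imp_dd:
  assumes "(f has_derivative f') (at p)"
  shows "(f has_derivative (\<lambda>h. dd [h] f p)) (at p)"
proof -
  have "(\<lambda>h. dd [h] f p) = f'"
    using frechet_derivative_at[OF assms] by (simp add: dderiv.simps)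
  with assms show ?thesis by simp
qed

lemma has_derivative_compose_fst:
  assumes "(g has_derivative g') (at (fst p))"
  shows "((\<lambda>q. g (fst q)) has_derivative (\<lambda>h. g' (fst h))) (at p)"
  using has_derivative_compose[OF has_derivative_fst[OF has_derivative_ident[of "at p"]] assms] by simp

lemma has_derivative_compose_snd:
  assumes "(g has_derivative g') (at (snd p))"
  shows "((\<lambda>q. g (snd q)) has_derivative (\<lambda>h. g' (snd h))) (at p)"
  using has_derivative_compose[OF has_derivative_snd[OF has_derivative_ident[of "at p"]] assms] by simp

lemma has_derivative_snd_nth:
  "((\<lambda>p. complex_of_real (snd p $ l)) has_derivative (\<lambda>h. complex_of_real (snd h $ l))) (at p)"
  by (intro has_derivative_of_real bounded_linear_imp_has_derivative
      bounded_linear_compose[OF bounded_linear_vec_nth bounded_linear_snd])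

lemma has_derivative_bloch_kinetic:
  assumes G: "smooth_on UNIV G"
  shows "(bloch_kinetic G l has_derivative (\<lambda>h. - dd [h, ey l, ey l] G p
      - 2 * \<i> * (of_real (snd h $ l) * dd [ey l] G p + of_real (snd p $ l) * dd [h, ey l] G p)
      + (of_real (snd h $ l) * of_real (snd p $ l) * G p + of_real (snd p $ l) * of_real (snd h $ l) * G p
         + of_real (snd p $ l) * of_real (snd p $ l) * dd [h] G p))) (at p)"
proof -
  note k = has_derivative_snd_nth[of l p]
  have first: "((\<lambda>p. (2 * \<i>) * (of_real (snd p $ l) * dd [ey l] G p)) has_derivative
      (\<lambda>h. 2 * \<i> * (of_real (snd h $ l) * dd [ey l] G p + of_real (snd p $ l) * dd [h, ey l] G p))) (at p)"
    by (rule has_derivative_eq_rhs[OF has_derivative_mult_right[OF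
          has_derivative_mult[OF k dd_has_derivative[OF G, of "[ey l]" p]]]])
      (simp add: fun_eq_iff algebra_simps)
  have zeroth: "((\<lambda>p. of_real (snd p $ l) * of_real (snd p $ l) * G p) has_derivative
      (\<lambda>h. of_real (snd h $ l) * of_real (snd p $ l) * G p + of_real (snd p $ l) * of_real (snd h $ l) * G p
        + of_real (snd p $ l) * of_real (snd p $ l) * dd [h] G p)) (at p)"
    by (rule has_derivative_eq_rhs[OF has_derivative_mult[OF has_derivative_mult[OF k k]
          smooth_on_has_derivative_dd[OF G]]])
      (simp add: fun_eq_iff algebra_simps)
  show ?thesis
    unfolding bloch_kinetic_def
    using has_derivative_add[OF has_derivative_diff[OF has_derivative_minus[OF
          dd_has_derivative[OF G, of "[ey l, ey l]" p]] first] zeroth]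
    by (simp add: mult.assoc)
qed

lemma dd_ek_bloch_kinetic:
  assumes G: "smooth_on UNIV G"
  shows "dd [ek j] (bloch_kinetic G l) p = bloch_kinetic (dd [ek j] G) l p
    + (if l = j then 2 * (- \<i> * dd [ey l] G p + of_real (snd p $ l) * G p) else 0)"
proof -
  have "dd [ek j, ey l, ey l] G = dd [ey l, ey l] (dd [ek j] G)" "dd [ek j, ey l] G = dd [ey l] (dd [ek j] G)"
    using dderiv_UNIV_commute[OF G, of "[]" "ek j" "ey l" "[ey l]"] dderiv_UNIV_commute[OF G, of "[ey l]" "ek j" "ey l" "[]"]
      dderiv_UNIV_commute[OF G, of "[]" "ek j" "ey l" "[]"]
    by (simp_all add: dderiv_append)
  moreover have "dd [ek j] (bloch_kinetic G l) p = frechet_derivative (bloch_kinetic G l) (at p) (ek j)"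
    by (simp add: dderiv.simps)
  ultimately show ?thesis
    unfolding frechet_derivative_at[OF has_derivative_bloch_kinetic[OF G], symmetric]
    by (auto simp: bloch_kinetic_def axis_def algebra_simps)
qed

lemma has_derivative_bloch_op:
  assumes G: "smooth_on UNIV G" and V: "\<And>y. V differentiable (at y)"
  shows "(bloch_op V G has_derivative (\<lambda>h. (1/2) * (\<Sum>l\<in>UNIV. dd [h] (bloch_kinetic G l) p)
    + (of_real (V (fst p)) * dd [h] G p + of_real (frechet_derivative V (at (fst p)) (fst h)) * G p))) (at p)"
proof -
  have "((\<lambda>p. \<Sum>l\<in>UNIV. bloch_kinetic G l p) has_derivative (\<lambda>h. \<Sum>l\<in>UNIV. dd [h] (bloch_kinetic G l) p)) (at p)"
    using has_derivative_sum[of UNIV "\<lambda>l. bloch_kinetic G l" "\<lambda>l h. dd [h] (bloch_kinetic G l) p" "at p"]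
      has_derivative_imp_dd[OF has_derivative_bloch_kinetic[OF G]]
    by blast
  moreover have "((\<lambda>p. complex_of_real (V (fst p))) has_derivative
      (\<lambda>h. complex_of_real (frechet_derivative V (at (fst p)) (fst h)))) (at p)"
    by (intro has_derivative_of_real has_derivative_compose_fst V[unfolded frechet_derivative_works])
  ultimately show ?thesis
    unfolding bloch_op_def
    by (rule has_derivative_add[OF has_derivative_mult_right has_derivative_mult[OF _ smooth_on_has_derivative_dd[OF G]]])
qed

lemma dd_ek_bloch_op:
  assumes G: "smooth_on UNIV G" and V: "\<And>y. V differentiable (at y)"
  shows "dd [ek j] (bloch_op V G) p = bloch_op V (dd [ek j] G) p + (- \<i> * dd [ey j] G p + of_real (snd p $ j) * G p)"
proof -
  have "frechet_derivative V (at y) 0 = 0" for y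
    using V[unfolded frechet_derivative_works] has_derivative_linear linear_0 by blast
  moreover have "dd [ek j] (bloch_op V G) p = (1/2) * (\<Sum>l\<in>UNIV. dd [ek j] (bloch_kinetic G l) p)
      + (of_real (V (fst p)) * dd [ek j] G p + of_real (frechet_derivative V (at (fst p)) (fst (ek j))) * G p)"
    using fun_cong[OF frechet_derivative_at[OF has_derivative_bloch_op[OF G V, of p]], of "ek j"]
    by (simp only: dderiv.simps)
  ultimately have "dd [ek j] (bloch_op V G) p
      = (1/2) * (\<Sum>l\<in>UNIV. dd [ek j] (bloch_kinetic G l) p) + of_real (V (fst p)) * dd [ek j] G p"
    by simp
  also have "\<dots> = bloch_op V (dd [ek j] G) p + (- \<i> * dd [ey j] G p + of_real (snd p $ j) * G p)"
    by (simp add: dd_ek_bloch_kinetic[OF G] sum.distrib bloch_op_def algebra_simps)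
  finally show ?thesis .
qed

lemma dd_ek_eigen_equation:
  fixes G R :: "(real^'d::finite) \<times> (real^'d) \<Rightarrow> complex" and Ev :: "real^'d \<Rightarrow> real"
  assumes G: "smooth_on UNIV G" and Ev: "smooth_on UNIV Ev" and V: "\<And>y. V differentiable (at y)"
    and eq: "\<And>p. bloch_op V G p - of_real (Ev (snd p)) * G p + R p = 0"
    and R: "\<And>p. (R has_derivative R' p) (at p)"
  shows "bloch_op V (dd [ek j] G) p - of_real (Ev (snd p)) * dd [ek j] G p
    + (- \<i> * dd [ey j] G p + of_real (snd p $ j) * G p - of_real (dd [axis j 1] Ev (snd p)) * G p + R' p (ek j)) = 0"
proof -
  have E: "((\<lambda>p. complex_of_real (Ev (snd p))) has_derivative (\<lambda>h. complex_of_real (dd [snd h] Ev (snd p)))) (at p)"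
    by (intro has_derivative_of_real has_derivative_compose_snd smooth_on_has_derivative_dd[OF Ev])
  have bloch: "(bloch_op V G has_derivative (\<lambda>h. dd [h] (bloch_op V G) p)) (at p)"
    by (rule has_derivative_imp_dd[OF has_derivative_bloch_op[OF G V]])
  have "((\<lambda>p. bloch_op V G p - of_real (Ev (snd p)) * G p + R p) has_derivative
      (\<lambda>h. dd [h] (bloch_op V G) p - (of_real (Ev (snd p)) * dd [h] G p + of_real (dd [snd h] Ev (snd p)) * G p)
        + R' p h)) (at p)"
    by (intro has_derivative_add has_derivative_diff bloch R
        has_derivative_mult[OF E smooth_on_has_derivative_dd[OF G], THEN has_derivative_eq_rhs])
      (simp add: fun_eq_iff algebra_simps)
  moreover have "((\<lambda>p. bloch_op V G p - of_real (Ev (snd p)) * G p + R p) has_derivative (\<lambda>h. 0)) (at p)"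
    using eq by simp
  ultimately have "(\<lambda>h. dd [h] (bloch_op V G) p - (of_real (Ev (snd p)) * dd [h] G p
      + of_real (dd [snd h] Ev (snd p)) * G p) + R' p h) = (\<lambda>h. 0)"
    by (rule has_derivative_unique)
  from fun_cong[OF this, of "ek j"] have "dd [ek j] (bloch_op V G) p - (of_real (Ev (snd p)) * dd [ek j] G p
      + of_real (dd [axis j 1] Ev (snd p)) * G p) + R' p (ek j) = 0"
    by simp
  then show ?thesis by (simp add: dd_ek_bloch_op[OF G V] algebra_simps)
qed

section \<open>Feynman--Hellmann identities\<close>

locale bloch_band = lattice_basis b for b :: "'d::finite \<Rightarrow> real^'d" +
  fixes V :: "real^'d \<Rightarrow> real" and E :: "real^'d \<Rightarrow> real" and X :: "(real^'d) \<times> (real^'d) \<Rightarrow> complex"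
  assumes differentiable_V: "\<And>y. V differentiable (at y)"
    and smooth_E: "smooth_on UNIV E"
    and smooth_X: "smooth_on UNIV X" and periodic_X: "y_periodic b X"
    and eigen: "\<And>p. bloch_op V X p = of_real (E (snd p)) * X p"
    and normalized: "\<And>k. integral (fund_dom b) (\<lambda>y. cnj (X (y, k)) * X (y, k)) = 1"
begin

definition proj :: "((real^'d) \<times> (real^'d) \<Rightarrow> complex) \<Rightarrow> real^'d \<Rightarrow> complex" where
  "proj F k = integral (fund_dom b) (\<lambda>y. cnj (X (y, k)) * F (y, k))"

lemma has_integral_proj:
  assumes "continuous_on UNIV (\<lambda>y. F (y, k))"
  shows "((\<lambda>y. cnj (X (y, k)) * F (y, k)) has_integral proj F k) (fund_dom b)"
  unfolding proj_def
  by (intro integrable_integral integrable_on_fund_dom continuous_on_mult continuous_on_cnj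
      continuous_on_slice_fst[OF smooth_X] assms)

lemma has_integral_proj_dd: "((\<lambda>y. cnj (X (y, k)) * dd vs X (y, k)) has_integral proj (dd vs X) k) (fund_dom b)"
  by (rule has_integral_proj[OF continuous_on_slice_fst[OF smooth_on_dderiv[OF smooth_X]]])

lemma has_integral_proj_X: "((\<lambda>y. cnj (X (y, k)) * X (y, k)) has_integral 1) (fund_dom b)"
  using has_integral_proj_dd[of k "[]"] normalized[of k] by (simp add: proj_def)

text \<open>Fredholm alternative: \<open>\<chi>(\<cdot>, k)\<close> is orthogonal to the range of \<open>Hk V k - E k\<close>.\<close>

lemma proj_eigen_residual:
  assumes G: "smooth_on UNIV G" "y_periodic b G"
    and eq: "\<And>y. bloch_op V G (y, k) - of_real (E k) * G (y, k) + R (y, k) = 0"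
  shows "proj R k = 0"
proof -
  have "continuous_on UNIV V"
    using differentiable_V differentiable_imp_continuous_within continuous_at_imp_continuous_on by blast
  then have "proj (bloch_op V G) k = integral (fund_dom b) (\<lambda>y. cnj (bloch_op V X (y, k)) * G (y, k))"
    unfolding proj_def by (rule bloch_op_symmetric[OF smooth_X periodic_X G])
  also have "\<dots> = integral (fund_dom b) (\<lambda>y. of_real (E k) * (cnj (X (y, k)) * G (y, k)))"
    by (simp add: eigen mult.assoc)
  also have "\<dots> = of_real (E k) * proj G k"
    using has_integral_mult_right[OF has_integral_proj[OF continuous_on_slice_fst[OF G(1)]]]
    by (rule integral_unique)
  finally have HG: "proj (bloch_op V G) k = of_real (E k) * proj G k" .
  have "((\<lambda>y. of_real (E k) * (cnj (X (y, k)) * G (y, k)) - cnj (X (y, k)) * bloch_op V G (y, k))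
      has_integral of_real (E k) * proj G k - proj (bloch_op V G) k) (fund_dom b)"
    by (rule has_integral_diff[OF has_integral_mult_right[OF has_integral_proj[OF continuous_on_slice_fst[OF G(1)]]]
        has_integral_proj[OF continuous_on_bloch_op_slice[OF G(1) \<open>continuous_on UNIV V\<close>]]])
  then have "((\<lambda>y. of_real (E k) * (cnj (X (y, k)) * G (y, k)) - cnj (X (y, k)) * bloch_op V G (y, k))
      has_integral 0) (fund_dom b)"
    unfolding HG diff_self .
  then have "((\<lambda>y. cnj (X (y, k)) * R (y, k)) has_integral 0) (fund_dom b)"
    by (rule has_integral_eq[rotated]) (simp add: eq[unfolded add_eq_0_iff] algebra_simps)
  then show ?thesis unfolding proj_def by (rule integral_unique)
qed

lemma proj_first_order_residual:
  "proj (\<lambda>p. - \<i> * dd [ey j] X p + (of_real (snd p $ j) - of_real (dd [axis j 1] E (snd p))) * X p) k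
    = - \<i> * proj (dd [ey j] X) k + (of_real (k $ j) - of_real (dd [axis j 1] E k))"
proof -
  have "((\<lambda>y. - \<i> * (cnj (X (y, k)) * dd [ey j] X (y, k))
      + (of_real (k $ j) - of_real (dd [axis j 1] E k)) * (cnj (X (y, k)) * X (y, k)))
    has_integral - \<i> * proj (dd [ey j] X) k + (of_real (k $ j) - of_real (dd [axis j 1] E k)) * 1) (fund_dom b)"
    by (intro has_integral_add has_integral_mult_right has_integral_proj_dd has_integral_proj_X)
  then show ?thesis
    unfolding proj_def by (intro integral_unique) (simp add: algebra_simps)
qed

lemma feynman_hellmann_1:
  "- \<i> * proj (dd [ey j] X) k + of_real (k $ j) - of_real (dd [axis j 1] E k) = 0"
proof -
  have "bloch_op V (dd [ek j] X) (y, k) - of_real (E k) * dd [ek j] X (y, k)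
      + (- \<i> * dd [ey j] X (y, k) + (of_real (k $ j) - of_real (dd [axis j 1] E k)) * X (y, k)) = 0" for y
    using dd_ek_eigen_equation[OF smooth_X smooth_E differentiable_V, of "\<lambda>_. 0" "\<lambda>_ _. 0" j "(y, k)"] eigen
    by (simp add: algebra_simps)
  then have "proj (\<lambda>p. - \<i> * dd [ey j] X p + (of_real (snd p $ j) - of_real (dd [axis j 1] E (snd p))) * X p) k = 0"
    by (intro proj_eigen_residual[where G = "dd [ek j] X"] smooth_on_dderiv[OF smooth_X]
        y_periodic_dd[OF smooth_X periodic_X]) simp
  then show ?thesis unfolding proj_first_order_residual by (simp add: algebra_simps)
qed

lemma has_derivative_first_order_residual:
  "((\<lambda>p. - \<i> * dd [ey j] X p + (of_real (snd p $ j) - of_real (dd [axis j 1] E (snd p))) * X p) has_derivative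
    (\<lambda>h. - \<i> * dd [h, ey j] X p + ((of_real (snd p $ j) - of_real (dd [axis j 1] E (snd p))) * dd [h] X p
      + (of_real (snd h $ j) - of_real (dd [snd h, axis j 1] E (snd p))) * X p))) (at p)"
proof -
  have "((\<lambda>p. complex_of_real (dd [axis j 1] E (snd p))) has_derivative
      (\<lambda>h. complex_of_real (dd [snd h, axis j 1] E (snd p)))) (at p)"
    by (intro has_derivative_of_real has_derivative_compose_snd dd_has_derivative[OF smooth_E])
  then show ?thesis
    by (rule has_derivative_add[OF has_derivative_mult_right[OF dd_has_derivative[OF smooth_X, of "[ey j]" p]]
          has_derivative_mult[OF has_derivative_diff[OF has_derivative_snd_nth[of j p]]
          smooth_on_has_derivative_dd[OF smooth_X]]])
qed

lemma proj_second_order_residual: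
  "proj (\<lambda>p. - \<i> * dd [ey m, ek j] X p + (of_real (snd p $ m) - of_real (dd [axis m 1] E (snd p))) * dd [ek j] X p
      - \<i> * dd [ek m, ey j] X p + (of_real (snd p $ j) - of_real (dd [axis j 1] E (snd p))) * dd [ek m] X p
      + (of_real (axis m 1 $ j) - of_real (dd [axis m 1, axis j 1] E (snd p))) * X p) k
    = - \<i> * proj (dd [ey m, ek j] X) k + (of_real (k $ m) - of_real (dd [axis m 1] E k)) * proj (dd [ek j] X) k
      - \<i> * proj (dd [ek m, ey j] X) k + (of_real (k $ j) - of_real (dd [axis j 1] E k)) * proj (dd [ek m] X) k
      + (of_real (axis m 1 $ j) - of_real (dd [axis m 1, axis j 1] E k))"
proof -
  have "((\<lambda>y. - \<i> * (cnj (X (y, k)) * dd [ey m, ek j] X (y, k))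
      + (of_real (k $ m) - of_real (dd [axis m 1] E k)) * (cnj (X (y, k)) * dd [ek j] X (y, k))
      - \<i> * (cnj (X (y, k)) * dd [ek m, ey j] X (y, k))
      + (of_real (k $ j) - of_real (dd [axis j 1] E k)) * (cnj (X (y, k)) * dd [ek m] X (y, k))
      + (of_real (axis m 1 $ j) - of_real (dd [axis m 1, axis j 1] E k)) * (cnj (X (y, k)) * X (y, k)))
    has_integral - \<i> * proj (dd [ey m, ek j] X) k + (of_real (k $ m) - of_real (dd [axis m 1] E k)) * proj (dd [ek j] X) k
      - \<i> * proj (dd [ek m, ey j] X) k + (of_real (k $ j) - of_real (dd [axis j 1] E k)) * proj (dd [ek m] X) k
      + (of_real (axis m 1 $ j) - of_real (dd [axis m 1, axis j 1] E k)) * 1) (fund_dom b)"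
    by (intro has_integral_add has_integral_diff has_integral_mult_right has_integral_proj_dd has_integral_proj_X)
  then show ?thesis
    unfolding proj_def by (intro integral_unique) (simp add: algebra_simps)
qed

lemma feynman_hellmann_2:
  "- \<i> * proj (dd [ey m, ek j] X) k + (of_real (k $ m) - of_real (dd [axis m 1] E k)) * proj (dd [ek j] X) k
    - \<i> * proj (dd [ek m, ey j] X) k + (of_real (k $ j) - of_real (dd [axis j 1] E k)) * proj (dd [ek m] X) k
    + (of_real (axis m 1 $ j) - of_real (dd [axis m 1, axis j 1] E k)) = 0"
proof -
  have first: "bloch_op V (dd [ek j] X) p - of_real (E (snd p)) * dd [ek j] X p
      + (- \<i> * dd [ey j] X p + (of_real (snd p $ j) - of_real (dd [axis j 1] E (snd p))) * X p) = 0" for p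
    using dd_ek_eigen_equation[OF smooth_X smooth_E differentiable_V, of "\<lambda>_. 0" "\<lambda>_ _. 0" j p] eigen
    by (simp add: algebra_simps)
  have "bloch_op V (dd [ek m, ek j] X) (y, k) - of_real (E k) * dd [ek m, ek j] X (y, k)
      + (- \<i> * dd [ey m, ek j] X (y, k) + (of_real (k $ m) - of_real (dd [axis m 1] E k)) * dd [ek j] X (y, k)
        - \<i> * dd [ek m, ey j] X (y, k) + (of_real (k $ j) - of_real (dd [axis j 1] E k)) * dd [ek m] X (y, k)
        + (of_real (axis m 1 $ j) - of_real (dd [axis m 1, axis j 1] E k)) * X (y, k)) = 0" for y
    using dd_ek_eigen_equation[OF smooth_on_dderiv[OF smooth_X] smooth_E differentiable_V first
        has_derivative_first_order_residual, of m "(y, k)"]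
    by (simp add: dderiv_append algebra_simps)
  then have "proj (\<lambda>p. - \<i> * dd [ey m, ek j] X p + (of_real (snd p $ m) - of_real (dd [axis m 1] E (snd p))) * dd [ek j] X p
      - \<i> * dd [ek m, ey j] X p + (of_real (snd p $ j) - of_real (dd [axis j 1] E (snd p))) * dd [ek m] X p
      + (of_real (axis m 1 $ j) - of_real (dd [axis m 1, axis j 1] E (snd p))) * X p) k = 0"
    by (intro proj_eigen_residual[where G = "dd [ek m, ek j] X"] smooth_on_dderiv[OF smooth_X]
        y_periodic_dd[OF smooth_X periodic_X]) simp
  then show ?thesis unfolding proj_second_order_residual .
qed

lemma has_integral_proj_expansion:
  "((\<lambda>y. cnj (X (y, k)) * (\<alpha> * X (y, k) + (\<Sum>j\<in>UNIV. \<beta> j * dd [ek j] X (y, k))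
      + (\<Sum>l\<in>UNIV. \<gamma> l * dd [ey l] X (y, k)) + (\<Sum>l\<in>UNIV. \<Sum>j\<in>UNIV. \<delta> l j * dd [ek j, ey l] X (y, k))))
    has_integral \<alpha> + (\<Sum>j\<in>UNIV. \<beta> j * proj (dd [ek j] X) k) + (\<Sum>l\<in>UNIV. \<gamma> l * proj (dd [ey l] X) k)
      + (\<Sum>l\<in>UNIV. \<Sum>j\<in>UNIV. \<delta> l j * proj (dd [ek j, ey l] X) k)) (fund_dom b)"
proof -
  have summand: "((\<lambda>y. c * (cnj (X (y, k)) * dd vs X (y, k))) has_integral c * proj (dd vs X) k) (fund_dom b)"
    for c vs by (rule has_integral_mult_right[OF has_integral_proj_dd])
  have single: "((\<lambda>y. \<Sum>j\<in>UNIV. c j * (cnj (X (y, k)) * dd (vs j) X (y, k)))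
      has_integral (\<Sum>j\<in>UNIV. c j * proj (dd (vs j) X) k)) (fund_dom b)" for c :: "'d \<Rightarrow> complex" and vs
    by (rule has_integral_sum[of UNIV "\<lambda>j y. c j * (cnj (X (y, k)) * dd (vs j) X (y, k))"
          "\<lambda>j. c j * proj (dd (vs j) X) k"]) (simp_all add: summand)
  have double: "((\<lambda>y. \<Sum>l\<in>UNIV. \<Sum>j\<in>UNIV. \<delta> l j * (cnj (X (y, k)) * dd [ek j, ey l] X (y, k)))
      has_integral (\<Sum>l\<in>UNIV. \<Sum>j\<in>UNIV. \<delta> l j * proj (dd [ek j, ey l] X) k)) (fund_dom b)"
    by (rule has_integral_sum[of UNIV "\<lambda>l y. \<Sum>j\<in>UNIV. \<delta> l j * (cnj (X (y, k)) * dd [ek j, ey l] X (y, k))"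
          "\<lambda>l. \<Sum>j\<in>UNIV. \<delta> l j * proj (dd [ek j, ey l] X) k"]) (simp_all add: single)
  have "((\<lambda>y. \<alpha> * (cnj (X (y, k)) * X (y, k)) + (\<Sum>j\<in>UNIV. \<beta> j * (cnj (X (y, k)) * dd [ek j] X (y, k)))
      + (\<Sum>l\<in>UNIV. \<gamma> l * (cnj (X (y, k)) * dd [ey l] X (y, k)))
      + (\<Sum>l\<in>UNIV. \<Sum>j\<in>UNIV. \<delta> l j * (cnj (X (y, k)) * dd [ek j, ey l] X (y, k))))
    has_integral \<alpha> * 1 + (\<Sum>j\<in>UNIV. \<beta> j * proj (dd [ek j] X) k) + (\<Sum>l\<in>UNIV. \<gamma> l * proj (dd [ey l] X) k)
      + (\<Sum>l\<in>UNIV. \<Sum>j\<in>UNIV. \<delta> l j * proj (dd [ek j, ey l] X) k)) (fund_dom b)"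
    by (intro has_integral_add has_integral_mult_right has_integral_proj_X single[of _ "\<lambda>j. [ek j]"]
        single[of _ "\<lambda>l. [ey l]"] double)
  then show ?thesis
    unfolding mult_1_right
    by (rule has_integral_eq[rotated]) (simp add: ring_distribs sum_distrib_left mult.left_commute)
qed

lemma has_integral_proj_nonlinearity:
  "((\<lambda>y. cnj (X (y, k)) * (c * nl \<sigma> (a * X (y, k))))
    has_integral c * nl \<sigma> a * of_real (integral (fund_dom b) (\<lambda>y. cmod (X (y, k)) ^ (2 * \<sigma> + 2)))) (fund_dom b)"
proof -
  have "continuous_on UNIV (\<lambda>y. cmod (X (y, k)) ^ (2 * \<sigma> + 2))"
    by (intro continuous_on_power continuous_on_norm continuous_on_slice_fst[OF smooth_X])
  from has_integral_linear[OF integrable_integral[OF integrable_on_fund_dom[OF this]] bounded_linear_of_real]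
  have "((\<lambda>y. complex_of_real (cmod (X (y, k)) ^ (2 * \<sigma> + 2)))
      has_integral of_real (integral (fund_dom b) (\<lambda>y. cmod (X (y, k)) ^ (2 * \<sigma> + 2)))) (fund_dom b)"
    by (simp add: o_def)
  from has_integral_mult_right[OF this, of "c * nl \<sigma> a"] show ?thesis
  proof (rule has_integral_eq[rotated])
    fix y
    have "cnj z * z = of_real (cmod z ^ 2)" for z
      using complex_norm_square[of z] by (simp add: mult.commute)
    then show "c * nl \<sigma> a * of_real (cmod (X (y, k)) ^ (2 * \<sigma> + 2)) = cnj (X (y, k)) * (c * nl \<sigma> (a * X (y, k)))"
      unfolding nl_def by (simp add: norm_mult power_mult_distrib power_add power2_eq_square algebra_simps)
  qed
qed

end

lemma bloch_bandI:
  fixes chi :: "real^'d::finite \<Rightarrow> real^'d \<Rightarrow> complex"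
  assumes basis: "independent (range b)" "inj b" and V: "\<And>y. V differentiable (at y)" and E: "smooth_on UNIV E"
    and chi: "smooth_on UNIV (\<lambda>(y, k). chi y k)" "\<And>k. periodic b (\<lambda>y. chi y k)"
    and eigen: "\<And>k. Hk V k (\<lambda>y. chi y k) = (\<lambda>y. of_real (E k) * chi y k)"
    and normalized: "\<And>k. l2inner b (\<lambda>y. chi y k) (\<lambda>y. chi y k) = 1"
  shows "bloch_band b V E (\<lambda>(y, k). chi y k)"
proof unfold_locales
  show "bloch_op V (\<lambda>(y, k). chi y k) p = of_real (E (snd p)) * (case p of (y, k) \<Rightarrow> chi y k)" for p
  proof (cases p)
    case (Pair y k)
    then show ?thesis
      using Hk_slice_eq_bloch_op[OF chi(1), of V k y] fun_cong[OF eigen[of k], of y] by simp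
  qed
  show "y_periodic b (\<lambda>(y, k). chi y k)" using chi(2) by (simp add: y_periodic_def periodic_def)
  show "integral (fund_dom b) (\<lambda>y. cnj (case (y, k) of (y, k) \<Rightarrow> chi y k) * (case (y, k) of (y, k) \<Rightarrow> chi y k)) = 1"
    for k using normalized[of k] by (simp add: l2inner_def)
qed (use basis V E chi(1) in auto)

section \<open>The WKB ansatz\<close>

locale phase_function =
  fixes \<tau> :: real and \<phi> :: "real \<Rightarrow> real^'d::finite \<Rightarrow> real"
  assumes smooth_phase: "smooth_on ({0..<\<tau>} \<times> UNIV) (\<lambda>(s, z). \<phi> s z)"
begin

abbreviation D\<phi> :: "(real \<times> (real^'d)) list \<Rightarrow> real \<times> (real^'d) \<Rightarrow> real" where
  "D\<phi> vs \<equiv> dderiv ({0..<\<tau>} \<times> UNIV) vs (\<lambda>(s, z). \<phi> s z)"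

lemma smooth_D\<phi>: "smooth_on ({0..<\<tau>} \<times> UNIV) (D\<phi> vs)"
  by (rule smooth_on_dderiv[OF smooth_phase])

lemma pd_phase: "s \<in> {0..<\<tau>} \<Longrightarrow> pd (\<phi> s) z j = D\<phi> [(0, axis j 1)] (s, z)"
  using pd_space_slice[OF smooth_phase, of s z j] by simp

lemma pd_D\<phi>: "s \<in> {0..<\<tau>} \<Longrightarrow> pd (\<lambda>z. D\<phi> vs (s, z)) z l = D\<phi> ((0, axis l 1) # vs) (s, z)"
  using pd_space_slice[OF smooth_D\<phi>, where s = s and z = z and l = l] by (simp add: dderiv_append)

lemma pd_pd_phase: "s \<in> {0..<\<tau>} \<Longrightarrow> pd (\<lambda>z. pd (\<phi> s) z j) z l = D\<phi> [(0, axis l 1), (0, axis j 1)] (s, z)"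
  using pd_D\<phi>[of s "[(0, axis j 1)]" z l] by (simp add: pd_phase)

lemma hessian_phase_symmetric:
  "s \<in> {0..<\<tau>} \<Longrightarrow> pd (\<lambda>z. pd (\<phi> s) z j) z l = pd (\<lambda>z. pd (\<phi> s) z l) z j"
  unfolding pd_pd_phase by (rule dderiv_commute_time_space[OF smooth_phase]) auto

lemma has_derivative_grad_phase:
  assumes s: "s \<in> {0..<\<tau>}"
  shows "(grad (\<phi> s) has_derivative (\<lambda>w. \<chi> j. D\<phi> [(0, w), (0, axis j 1)] (s, z))) (at z)"
proof (rule has_derivative_vecI)
  fix j
  have "(\<lambda>z. grad (\<phi> s) z $ j) = (\<lambda>z. D\<phi> [(0, axis j 1)] (s, z))"
    using pd_phase[OF s] by (simp add: grad_def)
  then show "((\<lambda>z. grad (\<phi> s) z $ j) has_derivative (\<lambda>h. (\<chi> j. D\<phi> [(0, h), (0, axis j 1)] (s, z)) $ j)) (at z)"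
    using has_derivative_space_slice[OF smooth_D\<phi> s, of "[(0, axis j 1)]" z] by (simp add: dderiv_append)
qed

lemma dt_pd_phase:
  assumes t: "t \<in> {0..<\<tau>}"
  shows "dt \<tau> (\<lambda>s. pd (\<phi> s) x j) t = D\<phi> [(1, 0), (0, axis j 1)] (t, x)"
  using dt_time_slice[OF smooth_D\<phi> t, where g = "\<lambda>s. pd (\<phi> s) x j" and z = x] pd_phase
  by (simp add: dderiv_append)

lemma has_vector_derivative_grad_phase:
  assumes t: "t \<in> {0..<\<tau>}"
  shows "((\<lambda>s. grad (\<phi> s) x) has_vector_derivative (\<chi> j. dt \<tau> (\<lambda>s. pd (\<phi> s) x j) t)) (at t within {0..<\<tau>})"
  unfolding has_vector_derivative_def
proof (rule has_derivative_vecI)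
  fix j
  have "((\<lambda>s. grad (\<phi> s) x $ j) has_vector_derivative
      dderiv ({0..<\<tau>} \<times> UNIV) [(1, 0)] (D\<phi> [(0, axis j 1)]) (t, x))
      (at t within {0..<\<tau>})"
    by (rule has_vector_derivative_transform[OF t _ has_vector_derivative_time_slice[OF smooth_D\<phi> t]])
      (simp add: grad_def pd_phase)
  then show "((\<lambda>s. grad (\<phi> s) x $ j) has_derivative (\<lambda>h. (h *\<^sub>R (\<chi> j. dt \<tau> (\<lambda>s. pd (\<phi> s) x j) t)) $ j))
      (at t within {0..<\<tau>})"
    unfolding has_vector_derivative_def by (simp add: dderiv_append dt_pd_phase[OF t])
qed

lemma dt_pd_phase_eikonal:
  fixes En U :: "real^'d \<Rightarrow> real"
  assumes t: "t \<in> {0..<\<tau>}" and En: "smooth_on UNIV En" and U: "\<And>z. U differentiable (at z)"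
    and eikonal: "\<And>s z. s \<in> {0..<\<tau>} \<Longrightarrow> dt \<tau> (\<lambda>s'. \<phi> s' z) s + En (grad (\<phi> s) z) + U z = 0"
  shows "dt \<tau> (\<lambda>s. pd (\<phi> s) x j) t
    = - (\<Sum>l\<in>UNIV. pd (\<lambda>z. pd (\<phi> t) z l) x j * dd [axis l 1] En (grad (\<phi> t) x)) - pd U x j"
proof -
  have En_grad: "(\<lambda>z. En (grad (\<phi> t) z)) differentiable (at x)"
    using has_derivative_compose[OF has_derivative_grad_phase[OF t] smooth_on_UNIV_has_derivative[OF En]]
    by (auto simp: differentiable_def)
  have "dt \<tau> (\<lambda>s. pd (\<phi> s) x j) t = D\<phi> [(0, axis j 1), (1, 0)] (t, x)"
    unfolding dt_pd_phase[OF t] by (rule dderiv_commute_time_space[OF smooth_phase t]) auto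
  also have "\<dots> = pd (\<lambda>z. D\<phi> [(1, 0)] (t, z)) x j"
    by (rule pd_D\<phi>[OF t, symmetric])
  also have "(\<lambda>z. D\<phi> [(1, 0)] (t, z)) = (\<lambda>z. - En (grad (\<phi> t) z) - U z)"
  proof
    fix z
    have "dt \<tau> (\<lambda>s. \<phi> s z) t = D\<phi> [(1, 0)] (t, z)"
      using dt_time_slice[OF smooth_phase t, of "\<lambda>s. \<phi> s z" z] by simp
    then show "D\<phi> [(1, 0)] (t, z) = - En (grad (\<phi> t) z) - U z"
      using eikonal[OF t, of z] by simp
  qed
  also have "pd (\<lambda>z. - En (grad (\<phi> t) z) - U z) x j = - pd (\<lambda>z. En (grad (\<phi> t) z)) x j - pd U x j"
    using pd_diff[OF differentiable_minus[OF En_grad] U] pd_minus[OF En_grad] by simp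
  also have "pd (\<lambda>z. En (grad (\<phi> t) z)) x j
      = (\<Sum>l\<in>UNIV. pd (\<lambda>z. pd (\<phi> t) z l) x j * dd [axis l 1] En (grad (\<phi> t) x))"
    unfolding pd_compose[OF En has_derivative_grad_phase[OF t]] pd_pd_phase[OF t] by simp
  finally show ?thesis .
qed

context
  fixes a0 :: "real \<Rightarrow> real^'d \<Rightarrow> complex" and X :: "(real^'d) \<times> (real^'d) \<Rightarrow> complex" and t :: real
  assumes smooth_a0: "smooth_on ({0..<\<tau>} \<times> UNIV) (\<lambda>(s, z). a0 s z)"
    and smooth_X: "smooth_on UNIV X" and t: "t \<in> {0..<\<tau>}"
begin

lemma differentiable_a0: "a0 t differentiable (at z)"
  using has_derivative_space_slice[OF smooth_a0 t, of z] by (auto simp: differentiable_def)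

lemma dt_ansatz:
  "dt \<tau> (\<lambda>s. a0 s x * X (y, grad (\<phi> s) x)) t
    = dt \<tau> (\<lambda>s. a0 s x) t * X (y, grad (\<phi> t) x)
      + a0 t x * (\<Sum>j\<in>UNIV. of_real (dt \<tau> (\<lambda>s. pd (\<phi> s) x j) t) * dd [ek j] X (y, grad (\<phi> t) x))"
proof -
  have "((\<lambda>s. a0 s x) has_vector_derivative dt \<tau> (\<lambda>s. a0 s x) t) (at t within {0..<\<tau>})"
    using has_vector_derivative_time_slice[OF smooth_a0 t, of x] dt_time_slice[OF smooth_a0 t, of "\<lambda>s. a0 s x" x]
    by simp
  from has_vector_derivative_mult[OF this has_vector_derivative_compose_in_snd[OF smooth_X
        has_vector_derivative_grad_phase[OF t]]]
  show ?thesis by (intro dt_eqI[OF _ t]) (simp add: scaleR_conv_of_real add.commute)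
qed

lemma pd_ansatz:
  "pd (\<lambda>z. a0 t z * X (y, grad (\<phi> t) z)) x l
    = pd (a0 t) x l * X (y, grad (\<phi> t) x)
      + a0 t x * (\<Sum>j\<in>UNIV. of_real (pd (\<lambda>z. pd (\<phi> t) z j) x l) * dd [ek j] X (y, grad (\<phi> t) x))"
proof -
  have "(\<lambda>z. X (y, grad (\<phi> t) z)) differentiable (at x)"
    using has_derivative_compose[OF has_derivative_Pair[OF has_derivative_const has_derivative_grad_phase[OF t]]
        smooth_on_UNIV_has_derivative[OF smooth_X]]
    by (auto simp: differentiable_def)
  then have "pd (\<lambda>z. a0 t z * X (y, grad (\<phi> t) z)) x l
      = pd (a0 t) x l * X (y, grad (\<phi> t) x) + a0 t x * pd (\<lambda>z. X (y, grad (\<phi> t) z)) x l"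
    by (rule pd_mult[OF differentiable_a0])
  then show ?thesis
    by (simp add: pd_compose_in_snd[OF smooth_X has_derivative_grad_phase[OF t]] pd_pd_phase[OF t] scaleR_conv_of_real)
qed

lemma pd_pd_ansatz:
  "pd (\<lambda>z. pd (\<lambda>y'. a0 t z * X (y', grad (\<phi> t) z)) y l) x l
    = pd (a0 t) x l * dd [ey l] X (y, grad (\<phi> t) x)
      + a0 t x * (\<Sum>j\<in>UNIV. of_real (pd (\<lambda>z. pd (\<phi> t) z j) x l) * dd [ek j, ey l] X (y, grad (\<phi> t) x))"
proof -
  have X': "smooth_on UNIV (dd [ey l] X)" by (rule smooth_on_dderiv[OF smooth_X])
  have "(\<lambda>z. pd (\<lambda>y'. a0 t z * X (y', grad (\<phi> t) z)) y l) = (\<lambda>z. a0 t z * dd [ey l] X (y, grad (\<phi> t) z))"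
  proof
    fix z
    have X_slice: "(\<lambda>y'. X (y', grad (\<phi> t) z)) differentiable (at y)"
      by (rule smooth_on_UNIV_differentiable[OF smooth_on_slice_fst[OF smooth_X]])
    show "pd (\<lambda>y'. a0 t z * X (y', grad (\<phi> t) z)) y l = a0 t z * dd [ey l] X (y, grad (\<phi> t) z)"
      by (simp add: pd_cmult[OF X_slice] pd_slice_fst[OF smooth_X])
  qed
  moreover have "(\<lambda>z. dd [ey l] X (y, grad (\<phi> t) z)) differentiable (at x)"
    using has_derivative_compose[OF has_derivative_Pair[OF has_derivative_const has_derivative_grad_phase[OF t]]
        smooth_on_UNIV_has_derivative[OF X']]
    by (auto simp: differentiable_def)
  then have "pd (\<lambda>z. a0 t z * dd [ey l] X (y, grad (\<phi> t) z)) x l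
      = pd (a0 t) x l * dd [ey l] X (y, grad (\<phi> t) x) + a0 t x * pd (\<lambda>z. dd [ey l] X (y, grad (\<phi> t) z)) x l"
    by (rule pd_mult[OF differentiable_a0])
  ultimately show ?thesis
    by (simp add: pd_compose_in_snd[OF X' has_derivative_grad_phase[OF t]] pd_pd_phase[OF t] scaleR_conv_of_real
        dderiv_append)
qed

lemma L1_ansatz:
  "L1 \<tau> \<phi> (\<lambda>s z w. a0 s z * X (w, grad (\<phi> s) z)) t x y
    = (\<i> * dt \<tau> (\<lambda>s. a0 s x) t + \<i> * (\<Sum>l\<in>UNIV. of_real (pd (\<phi> t) x l) * pd (a0 t) x l)
        + \<i> / 2 * of_real (lap (\<phi> t) x) * a0 t x) * X (y, grad (\<phi> t) x)
      + (\<Sum>j\<in>UNIV. \<i> * a0 t x * of_real (dt \<tau> (\<lambda>s. pd (\<phi> s) x j) t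
          + (\<Sum>l\<in>UNIV. pd (\<phi> t) x l * pd (\<lambda>z. pd (\<phi> t) z j) x l)) * dd [ek j] X (y, grad (\<phi> t) x))
      + (\<Sum>l\<in>UNIV. pd (a0 t) x l * dd [ey l] X (y, grad (\<phi> t) x))
      + (\<Sum>l\<in>UNIV. \<Sum>j\<in>UNIV. a0 t x * of_real (pd (\<lambda>z. pd (\<phi> t) z j) x l) * dd [ek j, ey l] X (y, grad (\<phi> t) x))"
  (is "_ = ?collected")
proof -
  let ?a = "a0 t x" and ?Xk = "\<lambda>j. dd [ek j] X (y, grad (\<phi> t) x)"
  let ?p = "\<lambda>l. pd (\<phi> t) x l" and ?H = "\<lambda>j l. pd (\<lambda>z. pd (\<phi> t) z j) x l"
  have "(\<Sum>l\<in>UNIV. of_real (?p l) * (?a * (\<Sum>j\<in>UNIV. of_real (?H j l) * ?Xk j)))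
      = (\<Sum>l\<in>UNIV. \<Sum>j\<in>UNIV. ?a * of_real (?p l * ?H j l) * ?Xk j)"
    by (simp add: sum_distrib_left mult_ac)
  also have "\<dots> = (\<Sum>j\<in>UNIV. \<Sum>l\<in>UNIV. ?a * of_real (?p l * ?H j l) * ?Xk j)"
    by (rule sum.swap)
  also have "\<dots> = (\<Sum>j\<in>UNIV. ?a * of_real (\<Sum>l\<in>UNIV. ?p l * ?H j l) * ?Xk j)"
    by (simp add: sum_distrib_left sum_distrib_right mult_ac)
  finally have transport: "(\<Sum>j\<in>UNIV. \<i> * ?a * of_real (dt \<tau> (\<lambda>s. pd (\<phi> s) x j) t + (\<Sum>l\<in>UNIV. ?p l * ?H j l)) * ?Xk j)
      = \<i> * (?a * (\<Sum>j\<in>UNIV. of_real (dt \<tau> (\<lambda>s. pd (\<phi> s) x j) t) * ?Xk j))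
        + \<i> * (\<Sum>l\<in>UNIV. of_real (?p l) * (?a * (\<Sum>j\<in>UNIV. of_real (?H j l) * ?Xk j)))"
    by (simp add: sum_distrib_left sum.distrib algebra_simps)
  have "L1 \<tau> \<phi> (\<lambda>s z w. a0 s z * X (w, grad (\<phi> s) z)) t x y
      = \<i> * (dt \<tau> (\<lambda>s. a0 s x) t * X (y, grad (\<phi> t) x) + ?a * (\<Sum>j\<in>UNIV. of_real (dt \<tau> (\<lambda>s. pd (\<phi> s) x j) t) * ?Xk j))
        + \<i> * (\<Sum>l\<in>UNIV. of_real (?p l) * (pd (a0 t) x l * X (y, grad (\<phi> t) x)
            + ?a * (\<Sum>j\<in>UNIV. of_real (?H j l) * ?Xk j)))
        + \<i> / 2 * of_real (lap (\<phi> t) x) * (?a * X (y, grad (\<phi> t) x))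
        + (\<Sum>l\<in>UNIV. pd (a0 t) x l * dd [ey l] X (y, grad (\<phi> t) x)
            + ?a * (\<Sum>j\<in>UNIV. of_real (?H j l) * dd [ek j, ey l] X (y, grad (\<phi> t) x)))"
    by (simp only: L1_def dt_ansatz pd_ansatz pd_pd_ansatz)
  also have "\<dots> = ?collected"
    unfolding transport by (simp add: algebra_simps sum.distrib sum_distrib_left sum_distrib_right)
  finally show ?thesis .
qed

end

end

section \<open>The solvability condition\<close>

lemma sum_swap_symmetric:
  fixes H :: "'d::finite \<Rightarrow> 'd \<Rightarrow> real" and f :: "'d \<Rightarrow> 'd \<Rightarrow> complex"
  assumes "\<And>j l. H j l = H l j"
  shows "(\<Sum>l\<in>UNIV. \<Sum>j\<in>UNIV. of_real (H j l) * f j l) = (\<Sum>l\<in>UNIV. \<Sum>j\<in>UNIV. of_real (H j l) * f l j)"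
  by (subst sum.swap) (simp add: assms)

lemma hessian_contraction:
  fixes A :: "'d::finite \<Rightarrow> complex" and C :: "'d \<Rightarrow> 'd \<Rightarrow> complex"
    and p Ed :: "'d \<Rightarrow> real" and H Edd :: "'d \<Rightarrow> 'd \<Rightarrow> real"
  assumes FH2: "\<And>m j. - \<i> * C m j + (of_real (p m) - of_real (Ed m)) * A j - \<i> * C j m
      + (of_real (p j) - of_real (Ed j)) * A m + (of_real (axis m 1 $ j) - of_real (Edd m j)) = 0"
    and sym: "\<And>j l. H j l = H l j"
  shows "of_real (\<Sum>l\<in>UNIV. \<Sum>j\<in>UNIV. H j l * Edd j l) = of_real (\<Sum>l\<in>UNIV. H l l)
    + 2 * (\<Sum>l\<in>UNIV. \<Sum>j\<in>UNIV. of_real (H j l) * ((of_real (p l) - of_real (Ed l)) * A j))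
    - 2 * \<i> * (\<Sum>l\<in>UNIV. \<Sum>j\<in>UNIV. of_real (H j l) * C l j)"
proof -
  have Edd: "of_real (Edd j l) = of_real (axis j 1 $ l) + (of_real (p j) - of_real (Ed j)) * A l
      + (of_real (p l) - of_real (Ed l)) * A j - \<i> * C j l - \<i> * C l j" for j l
    using FH2[of j l] by (simp add: algebra_simps)
  have trace: "(\<Sum>l\<in>UNIV. \<Sum>j\<in>UNIV. of_real (H j l) * (of_real (axis j 1 $ l) :: complex)) = of_real (\<Sum>l\<in>UNIV. H l l)"
    by (simp add: axis_def if_distrib cong: if_cong)
  have "of_real (\<Sum>l\<in>UNIV. \<Sum>j\<in>UNIV. H j l * Edd j l)
      = (\<Sum>l\<in>UNIV. \<Sum>j\<in>UNIV. of_real (H j l) * (of_real (axis j 1 $ l) :: complex))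
        + (\<Sum>l\<in>UNIV. \<Sum>j\<in>UNIV. of_real (H j l) * ((of_real (p j) - of_real (Ed j)) * A l))
        + (\<Sum>l\<in>UNIV. \<Sum>j\<in>UNIV. of_real (H j l) * ((of_real (p l) - of_real (Ed l)) * A j))
        - \<i> * (\<Sum>l\<in>UNIV. \<Sum>j\<in>UNIV. of_real (H j l) * C j l)
        - \<i> * (\<Sum>l\<in>UNIV. \<Sum>j\<in>UNIV. of_real (H j l) * C l j)"
    unfolding Edd of_real_sum of_real_mult
    by (simp add: algebra_simps sum.distrib sum_subtractf sum_distrib_left)
  then show ?thesis
    unfolding trace sum_swap_symmetric[OF sym, where f = "\<lambda>j l. (of_real (p j) - of_real (Ed j)) * A l"]
      sum_swap_symmetric[OF sym, where f = "\<lambda>j l. C j l"]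
    by simp
qed

text \<open>
  In the application \<open>A j\<close>, \<open>B l\<close> and \<open>C l j\<close> are the projections of \<open>\<partial>\<^sub>k\<^sub>j X\<close>, \<open>\<partial>\<^sub>y\<^sub>l X\<close>
  and \<open>\<partial>\<^sub>k\<^sub>j\<partial>\<^sub>y\<^sub>l X\<close> onto \<open>X\<close>; \<open>p\<close>, \<open>H\<close> and \<open>pt\<close> are \<open>\<nabla>\<phi>\<close>, its Hessian and its time
  derivative; \<open>Ed\<close>, \<open>Edd\<close> and \<open>Ud\<close> are the first and second derivatives of \<open>E\<close> at \<open>\<nabla>\<phi>\<close>
  and the gradient of \<open>U\<close>.
\<close>

lemma projected_transport_identity:
  fixes dta a :: complex and al A B :: "'d::finite \<Rightarrow> complex" and C :: "'d \<Rightarrow> 'd \<Rightarrow> complex"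
    and p Ed Ud pt :: "'d \<Rightarrow> real" and H Edd :: "'d \<Rightarrow> 'd \<Rightarrow> real"
  assumes FH1: "\<And>j. - \<i> * B j + of_real (p j) - of_real (Ed j) = 0"
    and FH2: "\<And>m j. - \<i> * C m j + (of_real (p m) - of_real (Ed m)) * A j - \<i> * C j m
      + (of_real (p j) - of_real (Ed j)) * A m + (of_real (axis m 1 $ j) - of_real (Edd m j)) = 0"
    and eikonal: "\<And>j. pt j = - (\<Sum>l\<in>UNIV. H l j * Ed l) - Ud j"
    and sym: "\<And>j l. H j l = H l j"
  shows "(\<i> * dta + \<i> * (\<Sum>l\<in>UNIV. of_real (p l) * al l) + \<i> / 2 * of_real (\<Sum>l\<in>UNIV. H l l) * a) * 1
      + (\<Sum>j\<in>UNIV. \<i> * a * of_real (pt j + (\<Sum>l\<in>UNIV. p l * H j l)) * A j)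
      + (\<Sum>l\<in>UNIV. al l * B l)
      + (\<Sum>l\<in>UNIV. \<Sum>j\<in>UNIV. a * of_real (H j l) * C l j)
    = \<i> * (dta + ((\<Sum>l\<in>UNIV. of_real (Ed l) * al l) + 1/2 * of_real (\<Sum>l\<in>UNIV. \<Sum>j\<in>UNIV. H j l * Edd j l) * a)
        - (\<Sum>l\<in>UNIV. A l * of_real (Ud l)) * a)"
proof -
  define S where "S = (\<Sum>l\<in>UNIV. \<Sum>j\<in>UNIV. of_real (H j l) * C l j)"
  define T where "T = (\<Sum>l\<in>UNIV. \<Sum>j\<in>UNIV. of_real (H j l) * ((of_real (p l) - of_real (Ed l)) * A j))"
  have B: "B l = \<i> * (of_real (Ed l) - of_real (p l))" for l
  proof -
    have "B l = (of_real (p l) - of_real (Ed l)) / \<i>" using FH1[of l] by (simp add: field_simps)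
    then show ?thesis by (simp add: field_simps)
  qed
  have "(\<Sum>j\<in>UNIV. of_real (pt j + (\<Sum>l\<in>UNIV. p l * H j l)) * A j)
      = (\<Sum>j\<in>UNIV. \<Sum>l\<in>UNIV. of_real (H j l) * ((of_real (p l) - of_real (Ed l)) * A j)) - (\<Sum>j\<in>UNIV. A j * of_real (Ud j))"
    unfolding eikonal by (simp add: sym algebra_simps sum_subtractf sum_distrib_left sum_distrib_right sum.distrib)
  also have "\<dots> = T - (\<Sum>l\<in>UNIV. A l * of_real (Ud l))"
    unfolding T_def by (subst sum.swap) (rule refl)
  finally have transport: "(\<Sum>j\<in>UNIV. \<i> * a * of_real (pt j + (\<Sum>l\<in>UNIV. p l * H j l)) * A j)
      = \<i> * a * (T - (\<Sum>l\<in>UNIV. A l * of_real (Ud l)))"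
    by (simp add: sum_distrib_left mult.assoc flip: sum_distrib_left)
  have "(\<Sum>l\<in>UNIV. \<Sum>j\<in>UNIV. a * of_real (H j l) * C l j) = a * S"
    unfolding S_def by (simp add: sum_distrib_left mult.assoc)
  moreover have "(\<Sum>l\<in>UNIV. al l * B l) = \<i> * (\<Sum>l\<in>UNIV. of_real (Ed l) * al l) - \<i> * (\<Sum>l\<in>UNIV. of_real (p l) * al l)"
    unfolding B by (simp add: algebra_simps sum_subtractf sum_distrib_left)
  ultimately show ?thesis
    unfolding transport hessian_contraction[OF FH2 sym] S_def T_def by (simp add: algebra_simps)
qed

locale band_wkb = bloch_band b V E X + phase_function \<tau> \<phi>
  for b :: "'d::finite \<Rightarrow> real^'d" and V E X and \<tau> :: real and \<phi> :: "real \<Rightarrow> real^'d \<Rightarrow> real" +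
  fixes U :: "real^'d \<Rightarrow> real"
  assumes differentiable_U: "\<And>z. U differentiable (at z)"
    and eikonal: "\<And>s z. s \<in> {0..<\<tau>} \<Longrightarrow> dt \<tau> (\<lambda>s'. \<phi> s' z) s + E (grad (\<phi> s) z) + U z = 0"
begin

lemma Lop_eq:
  assumes t: "t \<in> {0..<\<tau>}"
  shows "Lop E \<phi> a0 t x = (\<Sum>l\<in>UNIV. of_real (dd [axis l 1] E (grad (\<phi> t) x)) * pd (a0 t) x l)
    + 1/2 * of_real (\<Sum>l\<in>UNIV. \<Sum>j\<in>UNIV. pd (\<lambda>z. pd (\<phi> t) z j) x l * dd [axis j 1, axis l 1] E (grad (\<phi> t) x))
      * a0 t x"
proof -
  have pd_E: "pd E k l = dd [axis l 1] E k" for k l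
    using pd_dd[OF smooth_E, of "[]"] by simp
  have "pd (\<lambda>z. dd [axis l 1] E (grad (\<phi> t) z)) x l
      = (\<Sum>j\<in>UNIV. pd (\<lambda>z. pd (\<phi> t) z j) x l * dd [axis j 1, axis l 1] E (grad (\<phi> t) x))" for l
    unfolding pd_compose[OF smooth_on_dderiv[OF smooth_E] has_derivative_grad_phase[OF t]]
    by (simp add: pd_pd_phase[OF t] dderiv_append)
  then show ?thesis unfolding Lop_def pd_E by simp
qed

lemma beta_eq:
  "beta b (\<lambda>y k. X (y, k)) \<phi> U t x = (\<Sum>l\<in>UNIV. proj (dd [ek l] X) (grad (\<phi> t) x) * of_real (pd U x l))"
  unfolding beta_def l2inner_def proj_def by (simp add: pd_slice_snd[OF smooth_X])

lemma solvability_integral_eq: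
  assumes a0: "smooth_on ({0..<\<tau>} \<times> UNIV) (\<lambda>(s, z). a0 s z)" and t: "t \<in> {0..<\<tau>}"
  shows "integral (fund_dom b) (\<lambda>y. cnj (X (y, grad (\<phi> t) x)) *
      (L1 \<tau> \<phi> (\<lambda>s z w. a0 s z * X (w, grad (\<phi> s) z)) t x y
        - of_real (lam t) * nl \<sigma> (a0 t x * X (y, grad (\<phi> t) x))))
    = \<i> * (dt \<tau> (\<lambda>s. a0 s x) t + Lop E \<phi> a0 t x - beta b (\<lambda>y k. X (y, k)) \<phi> U t x * a0 t x
        - \<i> * of_real (kappa b \<sigma> lam (\<lambda>y k. X (y, k)) \<phi> t x) * nl \<sigma> (a0 t x))"
proof -
  let ?k = "grad (\<phi> t) x" and ?a = "a0 t x" and ?dta = "dt \<tau> (\<lambda>s. a0 s x) t"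
  let ?p = "\<lambda>l. pd (\<phi> t) x l" and ?H = "\<lambda>j l. pd (\<lambda>z. pd (\<phi> t) z j) x l"
  let ?Ed = "\<lambda>l. dd [axis l 1] E ?k" and ?Edd = "\<lambda>j l. dd [axis j 1, axis l 1] E ?k"
  let ?A = "\<lambda>j. proj (dd [ek j] X) ?k" and ?C = "\<lambda>l j. proj (dd [ek j, ey l] X) ?k"
  let ?N = "integral (fund_dom b) (\<lambda>y. cmod (X (y, ?k)) ^ (2 * \<sigma> + 2))"
  have k: "?k $ j = ?p j" for j by (simp add: grad_def)
  have "integral (fund_dom b) (\<lambda>y. cnj (X (y, ?k)) *
      (L1 \<tau> \<phi> (\<lambda>s z w. a0 s z * X (w, grad (\<phi> s) z)) t x y - of_real (lam t) * nl \<sigma> (?a * X (y, ?k))))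
    = (\<i> * ?dta + \<i> * (\<Sum>l\<in>UNIV. of_real (?p l) * pd (a0 t) x l) + \<i> / 2 * of_real (lap (\<phi> t) x) * ?a) * 1
      + (\<Sum>j\<in>UNIV. \<i> * ?a * of_real (dt \<tau> (\<lambda>s. pd (\<phi> s) x j) t + (\<Sum>l\<in>UNIV. ?p l * ?H j l)) * ?A j)
      + (\<Sum>l\<in>UNIV. pd (a0 t) x l * proj (dd [ey l] X) ?k)
      + (\<Sum>l\<in>UNIV. \<Sum>j\<in>UNIV. ?a * of_real (?H j l) * ?C l j)
      - of_real (lam t) * nl \<sigma> ?a * of_real ?N"
    unfolding L1_ansatz[OF a0 smooth_X t] right_diff_distrib mult_1_right
    by (rule integral_unique[OF has_integral_diff[OF has_integral_proj_expansion has_integral_proj_nonlinearity]])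
  also have "\<dots> = \<i> * (?dta + ((\<Sum>l\<in>UNIV. of_real (?Ed l) * pd (a0 t) x l)
        + 1/2 * of_real (\<Sum>l\<in>UNIV. \<Sum>j\<in>UNIV. ?H j l * ?Edd j l) * ?a) - (\<Sum>l\<in>UNIV. ?A l * of_real (pd U x l)) * ?a)
      - of_real (lam t) * nl \<sigma> ?a * of_real ?N"
  proof -
    have FH2: "- \<i> * ?C m j + (of_real (?p m) - of_real (?Ed m)) * ?A j - \<i> * ?C j m
        + (of_real (?p j) - of_real (?Ed j)) * ?A m + (of_real (axis m 1 $ j) - of_real (?Edd m j)) = 0" for m j
      using feynman_hellmann_2[of m j ?k] dderiv_UNIV_commute[OF smooth_X, of "[]" "ey m" "ek j" "[]"]
      by (simp add: k)
    have "lap (\<phi> t) x = (\<Sum>l\<in>UNIV. ?H l l)" by (simp add: lap_def)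
    with projected_transport_identity[where B = "\<lambda>l. proj (dd [ey l] X) ?k", OF _ FH2
        dt_pd_phase_eikonal[OF t smooth_E differentiable_U eikonal] hessian_phase_symmetric[OF t]]
      feynman_hellmann_1[of _ ?k]
    show ?thesis by (simp add: k)
  qed
  also have "\<dots> = \<i> * (?dta + Lop E \<phi> a0 t x - beta b (\<lambda>y k. X (y, k)) \<phi> U t x * ?a
        - \<i> * of_real (kappa b \<sigma> lam (\<lambda>y k. X (y, k)) \<phi> t x) * nl \<sigma> ?a)"
    unfolding Lop_eq[OF t] beta_eq kappa_def by (simp add: algebra_simps)
  finally show ?thesis .
qed

end

theorem mainTheorem3:
  fixes b :: "'d::finite \<Rightarrow> real^'d"
    and V U :: "real^'d \<Rightarrow> real"
    and lam :: "real \<Rightarrow> real"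
    and \<sigma> n :: nat
    and E :: "nat \<Rightarrow> real^'d \<Rightarrow> real"
    and chi :: "nat \<Rightarrow> real^'d \<Rightarrow> real^'d \<Rightarrow> complex"
    and \<tau> :: real
    and \<phi> :: "real \<Rightarrow> real^'d \<Rightarrow> real"
    and a0 :: "real \<Rightarrow> real^'d \<Rightarrow> complex"
    and t :: real and x :: "real^'d"
  assumes basis: "independent (range b)" "inj b"
    and V_smooth: "smooth_on UNIV V" and V_per: "periodic b V"
    and U_smooth: "smooth_on UNIV U"
    and lam_smooth: "smooth_on UNIV lam"
    and chi_smooth_y: "\<And>m k. m \<ge> 1 \<Longrightarrow> smooth_on UNIV (\<lambda>y. chi m y k)"
    and chi_per: "\<And>m k. m \<ge> 1 \<Longrightarrow> periodic b (\<lambda>y. chi m y k)"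
    and eigen: "\<And>m k. m \<ge> 1 \<Longrightarrow>
        Hk V k (\<lambda>y. chi m y k) = (\<lambda>y. complex_of_real (E m k) * chi m y k)"
    and orthonormal: "\<And>m m' k. m \<ge> 1 \<Longrightarrow> m' \<ge> 1 \<Longrightarrow>
        l2inner b (\<lambda>y. chi m y k) (\<lambda>y. chi m' y k) = (if m = m' then 1 else 0)"
    and ordered: "\<And>m k. m \<ge> 1 \<Longrightarrow> E m k \<le> E (Suc m) k"
    and complete: "\<And>k f. smooth_on UNIV f \<Longrightarrow> periodic b f \<Longrightarrow>
        (\<forall>m\<ge>1. l2inner b (\<lambda>y. chi m y k) f = 0) \<Longrightarrow> f = (\<lambda>_. 0)"
    and n_pos: "n \<ge> 1"
    and simple_isolated: "\<And>k. (n = 1 \<or> E (n - 1) k < E n k) \<and> E n k < E (Suc n) k"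
    and E_smooth: "smooth_on UNIV (E n)"
    and chi_smooth: "smooth_on UNIV (\<lambda>(y, k). chi n y k)"
    and tau_pos: "\<tau> > 0"
    and phi_smooth: "smooth_on ({0..<\<tau>} \<times> UNIV) (\<lambda>(s, z). \<phi> s z)"
    and eikonal: "\<And>s z. s \<in> {0..<\<tau>} \<Longrightarrow>
        dt \<tau> (\<lambda>s'. \<phi> s' z) s + E n (grad (\<phi> s) z) + U z = 0"
    and a0_smooth: "smooth_on ({0..<\<tau>} \<times> UNIV) (\<lambda>(s, z). a0 s z)"
    and t_in: "t \<in> {0..<\<tau>}"
  shows "integral (fund_dom b)
           (\<lambda>y. cnj (chi n y (grad (\<phi> t) x)) *
                 (L1 \<tau> \<phi> (\<lambda>s z w. a0 s z * chi n w (grad (\<phi> s) z)) t x y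
                  - complex_of_real (lam t) * nl \<sigma> (a0 t x * chi n y (grad (\<phi> t) x)))) = 0
     \<longleftrightarrow>
         dt \<tau> (\<lambda>s. a0 s x) t + Lop (E n) \<phi> a0 t x - beta b (chi n) \<phi> U t x * a0 t x
           = \<i> * complex_of_real (kappa b \<sigma> lam (chi n) \<phi> t x) * nl \<sigma> (a0 t x)"
proof -
  define X where "X = (\<lambda>(y, k). chi n y k)"
  have chi: "chi n = (\<lambda>y k. X (y, k))" by (simp add: X_def)
  have "bloch_band b V (E n) X"
    unfolding X_def using orthonormal[OF n_pos n_pos]
    by (intro bloch_bandI basis smooth_on_UNIV_differentiable[OF V_smooth] E_smooth chi_smooth
        chi_per[OF n_pos] eigen[OF n_pos]) simp
  then interpret band_wkb b V "E n" X \<tau> \<phi> U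
    using phi_smooth smooth_on_UNIV_differentiable[OF U_smooth] eikonal
    by (intro band_wkb.intro phase_function.intro band_wkb_axioms.intro)
  from solvability_integral_eq[OF a0_smooth t_in, of x lam \<sigma>] show ?thesis
    unfolding chi by simp
qed

end
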